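(* Let $\mathcal{A}$ be either $C([0,1])$ or $L^{\infty}((0,1))$, and let $S$ be the unilateral shift on $H_{\mathcal{A}}$, i.e. the operator with $Se_k=e_{k+1}$ for all $k\in\mathbb{N}$ (equivalently $S(x_1,x_2,\dots)=(0,x_1,x_2,\dots)$). Then $$\sigma^{\mathcal{A}}(S)=\{\alpha\in\mathcal{A}\mid \inf|\alpha|\le 1\},$$ and $\sigma_p^{\mathcal{A}}(S)=\varnothing$ in both cases.
   Context: $\mathcal{A}$ is a unital $C^*$-algebra and $H_{\mathcal{A}}=l_2(\mathcal{A})$ is the standard Hilbert $C^*$-module: sequences $x=(x_1,x_2,\dots)$ in $\mathcal{A}$ with $\sum_k x_k^*x_k$ norm-convergent, with $\mathcal{A}$-valued inner product $\langle x,y\rangle=\sum_k x_k^*y_k$ and right $\mathcal{A}$-action coordinatewise. $\{e_k\}_{k\in\mathbb{N}}$ is the standard orthonormal basis ($e_k$ has $1_{\mathcal{A}}$ in the $k$-th coordinate and $0$ elsewhere). $B^a(H_{\mathcal{A}})$ is the $C^*$-algebra of bounded adjointable $\mathcal{A}$-linear operators on $H_{\mathcal{A}}$. For $\alpha\in\mathcal{A}$, $\alpha I$ is the operator $(x_1,x_2,\dots)\mapsto(\alpha x_1,\alpha x_2,\dots)$, which lies in $B^a(H_{\mathcal{A}})$. For $F\in B^a(H_{\mathcal{A}})$: $\sigma^{\mathcal{A}}(F)=\{\alpha\in\mathcal{A}\mid F-\alpha I$ is not invertible in $B^a(H_{\mathcal{A}})\}$ and $\sigma_p^{\mathcal{A}}(F)=\{\alpha\in\mathcal{A}\mid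 \ker(F-\alpha I)\neq\{0\}\}$. For $\alpha\in C([0,1])$, $\inf|\alpha|$ is the usual infimum of $|\alpha|$; for $\alpha\in L^\infty((0,1))$, $\inf|\alpha|$ denotes the essential infimum $\inf\{C>0\mid \mu(|\alpha|^{-1}[0,C])>0\}=\sup\{K>0\mid |\alpha|>K \text{ a.e. on }(0,1)\}$, $\mu$ being Lebesgue measure. *)

theory Defs
  imports "HOL-Analysis.Analysis"
begin

record 'a calg =
  c_add  :: "'a \<Rightarrow> 'a \<Rightarrow> 'a"
  c_mul  :: "'a \<Rightarrow> 'a \<Rightarrow> 'a"
  c_neg  :: "'a \<Rightarrow> 'a"
  c_star :: "'a \<Rightarrow> 'a"
  c_norm :: "'a \<Rightarrow> real"
  c_zero :: "'a"
  c_one  :: "'a"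

primrec psum :: "'a calg \<Rightarrow> (nat \<Rightarrow> 'a) \<Rightarrow> nat \<Rightarrow> 'a" where
  "psum A f 0 = c_zero A"
| "psum A f (Suc n) = c_add A (psum A f n) (f n)"

definition conv_to :: "'a calg \<Rightarrow> (nat \<Rightarrow> 'a) \<Rightarrow> 'a \<Rightarrow> bool" where
  "conv_to A f s \<longleftrightarrow> (\<lambda>n. c_norm A (c_add A (psum A f n) (c_neg A s))) \<longlonglongrightarrow> 0"

definition HA :: "'a calg \<Rightarrow> (nat \<Rightarrow> 'a) set" where
  "HA A = {x. \<exists>s. conv_to A (\<lambda>k. c_mul A (c_star A (x k)) (x k)) s}"

definition inner_A :: "'a calg \<Rightarrow> (nat \<Rightarrow> 'a) \<Rightarrow> (nat \<Rightarrow> 'a) \<Rightarrow> 'a" where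
  "inner_A A x y = (THE s. conv_to A (\<lambda>k. c_mul A (c_star A (x k)) (y k)) s)"

definition hnorm :: "'a calg \<Rightarrow> (nat \<Rightarrow> 'a) \<Rightarrow> real" where
  "hnorm A x = sqrt (c_norm A (inner_A A x x))"

definition vadd :: "'a calg \<Rightarrow> (nat \<Rightarrow> 'a) \<Rightarrow> (nat \<Rightarrow> 'a) \<Rightarrow> (nat \<Rightarrow> 'a)" where
  "vadd A x y = (\<lambda>k. c_add A (x k) (y k))"

definition ract :: "'a calg \<Rightarrow> (nat \<Rightarrow> 'a) \<Rightarrow> 'a \<Rightarrow> (nat \<Rightarrow> 'a)" where
  "ract A x a = (\<lambda>k. c_mul A (x k) a)"

definition vzero :: "'a calg \<Rightarrow> (nat \<Rightarrow> 'a)" where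
  "vzero A = (\<lambda>k. c_zero A)"

text \<open>Bounded adjointable A-linear operators on H_A (operators are considered on H_A only).\<close>
definition Ba :: "'a calg \<Rightarrow> ((nat \<Rightarrow> 'a) \<Rightarrow> (nat \<Rightarrow> 'a)) set" where
  "Ba A = {F. (\<forall>x\<in>HA A. F x \<in> HA A)
     \<and> (\<forall>x\<in>HA A. \<forall>y\<in>HA A. F (vadd A x y) = vadd A (F x) (F y))
     \<and> (\<forall>x\<in>HA A. \<forall>a. F (ract A x a) = ract A (F x) a)
     \<and> (\<exists>C. \<forall>x\<in>HA A. hnorm A (F x) \<le> C * hnorm A x)
     \<and> (\<exists>G. (\<forall>y\<in>HA A. G y \<in> HA A)
            \<and> (\<forall>x\<in>HA A. \<forall>y\<in>HA A. inner_A A (F x) y = inner_A A x (G y)))}"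

definition invertible_Ba :: "'a calg \<Rightarrow> ((nat \<Rightarrow> 'a) \<Rightarrow> (nat \<Rightarrow> 'a)) \<Rightarrow> bool" where
  "invertible_Ba A F \<longleftrightarrow> (\<exists>G\<in>Ba A. \<forall>x\<in>HA A. G (F x) = x \<and> F (G x) = x)"

definition minus_scalar :: "'a calg \<Rightarrow> ((nat \<Rightarrow> 'a) \<Rightarrow> (nat \<Rightarrow> 'a)) \<Rightarrow> 'a \<Rightarrow> ((nat \<Rightarrow> 'a) \<Rightarrow> (nat \<Rightarrow> 'a))" where
  "minus_scalar A F \<alpha> = (\<lambda>x k. c_add A (F x k) (c_neg A (c_mul A \<alpha> (x k))))"

definition A_spectrum :: "'a calg \<Rightarrow> ((nat \<Rightarrow> 'a) \<Rightarrow> (nat \<Rightarrow> 'a)) \<Rightarrow> 'a set" where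
  "A_spectrum A F = {\<alpha>. \<not> invertible_Ba A (minus_scalar A F \<alpha>)}"

definition A_point_spectrum :: "'a calg \<Rightarrow> ((nat \<Rightarrow> 'a) \<Rightarrow> (nat \<Rightarrow> 'a)) \<Rightarrow> 'a set" where
  "A_point_spectrum A F = {\<alpha>. \<exists>x\<in>HA A. x \<noteq> vzero A \<and> minus_scalar A F \<alpha> x = vzero A}"

text \<open>Unilateral shift: S(x_1,x_2,...) = (0,x_1,x_2,...) (indices start at 0 here).\<close>
definition shift :: "'a calg \<Rightarrow> (nat \<Rightarrow> 'a) \<Rightarrow> (nat \<Rightarrow> 'a)" where
  "shift A x = (\<lambda>k. if k = 0 then c_zero A else x (k - 1))"

section \<open>A = C([0,1]) (complex-valued), functions normalised to 0 outside [0,1]\<close>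

typedef C01 = "{f :: real \<Rightarrow> complex. continuous_on {0..1} f \<and> (\<forall>t. t \<notin> {0..1} \<longrightarrow> f t = 0)}"
  by (rule exI[of _ "\<lambda>_. 0"]) auto

definition C01_alg :: "C01 calg" where
  "C01_alg = \<lparr> c_add = (\<lambda>a b. Abs_C01 (\<lambda>t. Rep_C01 a t + Rep_C01 b t)),
               c_mul = (\<lambda>a b. Abs_C01 (\<lambda>t. Rep_C01 a t * Rep_C01 b t)),
               c_neg = (\<lambda>a. Abs_C01 (\<lambda>t. - Rep_C01 a t)),
               c_star = (\<lambda>a. Abs_C01 (\<lambda>t. cnj (Rep_C01 a t))),
               c_norm = (\<lambda>a. Sup ((\<lambda>t. cmod (Rep_C01 a t)) ` {0..1})),
               c_zero = Abs_C01 (\<lambda>t. 0),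
               c_one = Abs_C01 (\<lambda>t. if t \<in> {0..1} then 1 else 0) \<rparr>"

definition inf_abs_C01 :: "C01 \<Rightarrow> real" where
  "inf_abs_C01 a = Inf ((\<lambda>t. cmod (Rep_C01 a t)) ` {0..1})"

section \<open>A = L^infinity((0,1)) (complex-valued), classes modulo a.e. equality\<close>

definition Linf_set :: "(real \<Rightarrow> complex) set" where
  "Linf_set = {f. set_borel_measurable lborel {0<..<1} f
                  \<and> (\<exists>C. AE t in lborel. t \<in> {0<..<1} \<longrightarrow> cmod (f t) \<le> C)}"

definition Linf_rel :: "(real \<Rightarrow> complex) \<Rightarrow> (real \<Rightarrow> complex) \<Rightarrow> bool" where
  "Linf_rel f g \<longleftrightarrow> f \<in> Linf_set \<and> g \<in> Linf_set
                     \<and> (AE t in lborel. t \<in> {0<..<1} \<longrightarrow> f t = g t)"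

lemma Linf_rel_part_equivp: "part_equivp Linf_rel"
proof (rule part_equivpI)
  show "\<exists>x. Linf_rel x x"
    by (rule exI[of _ "\<lambda>_. 0"]) (auto simp: Linf_rel_def Linf_set_def set_borel_measurable_def)
  show "symp Linf_rel"
    by (auto simp: symp_def Linf_rel_def elim: AE_mp)
  show "transp Linf_rel"
    unfolding transp_def Linf_rel_def
    by (auto elim!: AE_mp[OF AE_conjI, rotated])
qed

quotient_type Linf = "real \<Rightarrow> complex" / partial: Linf_rel
  by (rule Linf_rel_part_equivp)

definition Linf_alg :: "Linf calg" where
  "Linf_alg = \<lparr> c_add = (\<lambda>a b. abs_Linf (\<lambda>t. rep_Linf a t + rep_Linf b t)),
               c_mul = (\<lambda>a b. abs_Linf (\<lambda>t. rep_Linf a t * rep_Linf b t)),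
               c_neg = (\<lambda>a. abs_Linf (\<lambda>t. - rep_Linf a t)),
               c_star = (\<lambda>a. abs_Linf (\<lambda>t. cnj (rep_Linf a t))),
               c_norm = (\<lambda>a. Inf {C. 0 \<le> C \<and> (AE t in lborel. t \<in> {0<..<1} \<longrightarrow> cmod (rep_Linf a t) \<le> C)}),
               c_zero = abs_Linf (\<lambda>t. 0),
               c_one = abs_Linf (\<lambda>t. 1) \<rparr>"

definition essinf_abs_Linf :: "Linf \<Rightarrow> real" where
  "essinf_abs_Linf a = Inf {C. 0 < C \<and> emeasure lborel {t \<in> {0<..<1}. cmod (rep_Linf a t) \<le> C} > 0}"

end

theory Submission
  imports Defs
begin

text \<open>Both algebras consist of bounded functions modulo a filter \<open>F\<close> (everywhere on \<open>[0,1]\<close>, resp.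
  almost everywhere on \<open>(0,1)\<close>), so \<open>H\<^sub>A\<close> is a space of sequences \<open>x\<^sub>k(t)\<close> that are square
  summable uniformly in \<open>t\<close>, and \<open>S - \<alpha>\<close> acts pointwise in \<open>t\<close> as \<open>S - \<alpha>(t)\<close> on \<open>l\<^sup>2\<close>.

  If \<open>|\<alpha>| \<ge> K > 1\<close>, then \<open>\<beta> = 1/\<alpha>\<close> lies in \<open>A\<close> and \<open>(S - \<alpha>)\<inverse>\<close> is, pointwise, the causal recursion
  \<open>Y\<^sub>0 = -\<beta> X\<^sub>0\<close>, \<open>Y\<^sub>k\<^sub>+\<^sub>1 = \<beta> (Y\<^sub>k - X\<^sub>k\<^sub>+\<^sub>1)\<close>, with adjoint \<open>W\<^sub>j = -\<Sum>\<^sub>i (cnj \<beta>)\<^sup>i\<^sup>+\<^sup>1 V\<^sub>j\<^sub>+\<^sub>i\<close>.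
  Since \<open>|\<beta>| \<le> 1/K < 1\<close> everywhere, both obey \<open>l\<^sup>2\<close> and tail estimates uniform in \<open>t\<close>, so they map
  \<open>H\<^sub>A\<close> into itself and give a bounded adjointable inverse.

  If \<open>inf |\<alpha>| \<le> 1\<close>, then for every \<open>c > 1\<close> some \<open>\<phi> \<noteq> 0\<close> in \<open>A\<close> is supported where \<open>|\<alpha>| \<le> c\<close>.
  The vectors \<open>z\<^sub>k = \<phi> (cnj \<alpha>)\<^sup>k\<close>, \<open>k < N\<close>, are almost eigenvectors of \<open>S\<^sup>*\<close>; pairing \<open>z\<close> with
  \<open>(S - \<alpha>) u = z\<close> telescopes, and for \<open>N\<close> large and \<open>c\<close> close to \<open>1\<close> this contradicts any bound on
  \<open>\<parallel>u\<parallel> / \<parallel>z\<parallel>\<close>. The point spectrum is empty because \<open>(S - \<alpha>(t)) x = 0\<close> forces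
  \<open>x\<^sub>0 = x\<^sub>1 = \<dots> = 0\<close> pointwise.\<close>

section \<open>Complex sequences: the shift and its resolvent\<close>

definition shift_minus_seq :: "complex \<Rightarrow> (nat \<Rightarrow> complex) \<Rightarrow> nat \<Rightarrow> complex" where
  "shift_minus_seq a X k = (if k = 0 then 0 else X (k - 1)) - a * X k"

lemma shift_minus_seq_zeroD:
  assumes "\<And>k. shift_minus_seq a X k = 0"
  shows "X k = 0"
proof (cases "a = 0")
  case True
  with assms[of "Suc k"] show ?thesis by (simp add: shift_minus_seq_def)
next
  case False
  show ?thesis
  proof (induction k)
    case 0
    from assms[of 0] False show ?case by (simp add: shift_minus_seq_def)
  next
    case (Suc k)
    from assms[of "Suc k"] Suc False show ?case by (simp add: shift_minus_seq_def)
  qed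
qed

text \<open>For \<open>b = 1/a\<close>, \<open>res_seq b\<close> is \<open>(S - a)\<inverse>\<close>, obtained by solving \<open>shift_minus_seq a Y = X\<close>
  forwards; \<open>res_adj_seq b\<close> is its adjoint \<open>(S\<^sup>* - cnj a)\<inverse>\<close>, obtained by solving backwards.\<close>

primrec res_seq :: "complex \<Rightarrow> (nat \<Rightarrow> complex) \<Rightarrow> nat \<Rightarrow> complex" where
  "res_seq b X 0 = - b * X 0"
| "res_seq b X (Suc k) = b * (res_seq b X k - X (Suc k))"

definition res_adj_seq :: "complex \<Rightarrow> (nat \<Rightarrow> complex) \<Rightarrow> nat \<Rightarrow> complex" where
  "res_adj_seq b V j = - (\<Sum>i. cnj b ^ Suc i * V (j + i))"

lemma shift_minus_res_seq:
  assumes "a * b = 1"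
  shows "shift_minus_seq a (res_seq b X) k = X k"
proof (cases k)
  case (Suc j)
  have "res_seq b X j - a * (b * (res_seq b X j - X (Suc j)))
      = res_seq b X j - (a * b) * (res_seq b X j - X (Suc j))"
    by (simp add: algebra_simps)
  with Suc assms show ?thesis by (simp add: shift_minus_seq_def)
qed (use assms in \<open>simp add: shift_minus_seq_def\<close>)

lemma res_seq_shift_minus:
  assumes "a * b = 1"
  shows "res_seq b (shift_minus_seq a X) k = X k"
proof (induction k)
  case 0
  then show ?case using assms by (simp add: shift_minus_seq_def algebra_simps)
next
  case (Suc k)
  have "res_seq b (shift_minus_seq a X) (Suc k) = b * (X k - (X k - a * X (Suc k)))"
    unfolding res_seq.simps Suc.IH by (simp add: shift_minus_seq_def)
  also have "\<dots> = (a * b) * X (Suc k)"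
    by (simp add: algebra_simps)
  finally show ?case using assms by simp
qed

lemma res_seq_add: "res_seq b (\<lambda>k. X k + Z k) k = res_seq b X k + res_seq b Z k"
  by (induction k) (simp_all add: algebra_simps)

lemma res_seq_mult_right: "res_seq b (\<lambda>k. X k * c) k = res_seq b X k * c"
  by (induction k) (simp_all add: algebra_simps)

lemma sum_lessThan_add: "(\<Sum>k<n + m. f k) = (\<Sum>k<n. f k) + (\<Sum>k<m. f (n + k))"
  for n m :: nat
  by (induction m) (simp_all add: add_ac)

lemma power2_mult_add_le:
  fixes q u v :: real
  assumes "0 \<le> q" "q < 1"
  shows "(q * (u + v))\<^sup>2 \<le> q * u\<^sup>2 + q\<^sup>2 / (1 - q) * v\<^sup>2"
proof -
  have "q * u\<^sup>2 + q\<^sup>2 / (1 - q) * v\<^sup>2 - (q * (u + v))\<^sup>2 = q / (1 - q) * ((1 - q) * u - q * v)\<^sup>2"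
    using assms by (simp add: field_simps power2_eq_square)
  moreover have "0 \<le> q / (1 - q) * ((1 - q) * u - q * v)\<^sup>2"
    using assms by simp
  ultimately show ?thesis by linarith
qed

lemma sum_le_of_forward_recursion:
  fixes p c :: "nat \<Rightarrow> real"
  assumes "0 \<le> q" "\<And>k. 0 \<le> p k" "\<And>k. p (Suc k) \<le> q * p k + c (Suc k)"
  shows "(1 - q) * (\<Sum>k<Suc n. p k) \<le> p 0 + (\<Sum>k<n. c (Suc k))"
proof -
  have "(\<Sum>k<n. p (Suc k)) \<le> (\<Sum>k<n. q * p k + c (Suc k))"
    by (intro sum_mono assms(3))
  also have "\<dots> = q * (\<Sum>k<n. p k) + (\<Sum>k<n. c (Suc k))"
    by (simp add: sum.distrib sum_distrib_left)
  also have "\<dots> \<le> q * (\<Sum>k<Suc n. p k) + (\<Sum>k<n. c (Suc k))"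
    using assms(1) assms(2)[of n] by (simp add: mult_left_mono)
  finally show ?thesis
    using sum.lessThan_Suc_shift[of p n] by (simp only: left_diff_distrib distrib_left)
qed

lemma sum_le_of_backward_recursion:
  fixes p c :: "nat \<Rightarrow> real"
  assumes "0 \<le> q" "\<And>k. 0 \<le> p k" "\<And>k. p k \<le> q * p (Suc k) + c k"
  shows "(1 - q) * (\<Sum>k<n. p k) \<le> q * p n + (\<Sum>k<n. c k)"
proof -
  have "(\<Sum>k<n. p k) \<le> (\<Sum>k<n. q * p (Suc k) + c k)"
    by (intro sum_mono assms(3))
  also have "\<dots> = q * ((\<Sum>k<Suc n. p k) - p 0) + (\<Sum>k<n. c k)"
    by (simp only: sum.lessThan_Suc_shift sum.distrib sum_distrib_left) (simp add: sum_distrib_left)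
  also have "\<dots> \<le> q * (\<Sum>k<n. p k) + q * p n + (\<Sum>k<n. c k)"
    using assms(1) assms(2)[of 0] by (simp add: algebra_simps mult_left_mono)
  finally show ?thesis by (simp add: algebra_simps)
qed

lemma l2_tendsto_zero:
  fixes V :: "nat \<Rightarrow> 'a::real_normed_vector"
  assumes "summable (\<lambda>k. (norm (V k))\<^sup>2)"
  shows "V \<longlonglongrightarrow> 0"
proof -
  have "(\<lambda>k. sqrt ((norm (V k))\<^sup>2)) \<longlonglongrightarrow> sqrt 0"
    by (intro tendsto_real_sqrt summable_LIMSEQ_zero assms)
  then show ?thesis by (simp add: tendsto_norm_zero_iff)
qed

lemma cnj_mult_self: "cnj z * z = complex_of_real ((cmod z)\<^sup>2)"
  by (subst mult.commute) (rule complex_norm_square[symmetric])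

lemma norm_cnj_mult_le: "cmod (cnj z * w) \<le> ((cmod z)\<^sup>2 + (cmod w)\<^sup>2) / 2"
proof -
  have "0 \<le> (cmod z - cmod w)\<^sup>2" by simp
  then show ?thesis by (simp add: norm_mult power2_eq_square algebra_simps)
qed

lemma l2_cnj_mult_summable:
  fixes f g :: "nat \<Rightarrow> complex"
  assumes "summable (\<lambda>k. (cmod (f k))\<^sup>2)" "summable (\<lambda>k. (cmod (g k))\<^sup>2)"
  shows "summable (\<lambda>k. cnj (f k) * g k)"
proof (rule summable_comparison_test'[where N = 0])
  show "summable (\<lambda>k. ((cmod (f k))\<^sup>2 + (cmod (g k))\<^sup>2) / 2)"
    using assms by (intro summable_divide summable_add)
qed (rule norm_cnj_mult_le)

text \<open>\<open>W (Suc k) - cnj a * W k\<close> is \<open>((S\<^sup>* - cnj a) W)\<^sub>k\<close>.\<close>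

lemma suminf_shift_minus_adjoint:
  fixes Y W :: "nat \<Rightarrow> complex"
  assumes Y: "summable (\<lambda>k. (cmod (Y k))\<^sup>2)" and W: "summable (\<lambda>k. (cmod (W k))\<^sup>2)"
  shows "(\<lambda>k. cnj (shift_minus_seq a Y k) * W k) sums (\<Sum>k. cnj (Y k) * (W (Suc k) - cnj a * W k))"
proof -
  define P where "P k = cnj (Y k) * W (Suc k)" for k
  define Q where "Q k = cnj a * (cnj (Y k) * W k)" for k
  have "summable (\<lambda>k. (cmod (W (Suc k)))\<^sup>2)"
    using W by (subst summable_Suc_iff)
  then have P: "P sums suminf P"
    unfolding P_def by (intro summable_sums l2_cnj_mult_summable Y)
  have Q: "Q sums suminf Q"
    unfolding Q_def by (intro summable_sums summable_mult l2_cnj_mult_summable Y W)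
  then have "(\<lambda>k. Q (Suc k)) sums (suminf Q - Q 0)"
    by (simp add: sums_Suc_iff)
  with P have "(\<lambda>k. P k - Q (Suc k)) sums (suminf P - (suminf Q - Q 0))"
    by (rule sums_diff)
  moreover have "cnj (shift_minus_seq a Y (Suc k)) * W (Suc k) = P k - Q (Suc k)" for k
    by (simp add: shift_minus_seq_def P_def Q_def algebra_simps)
  ultimately have "(\<lambda>k. cnj (shift_minus_seq a Y k) * W k) sums
      (suminf P - (suminf Q - Q 0) + cnj (shift_minus_seq a Y 0) * W 0)"
    by (simp add: sums_Suc_iff[symmetric, where f = "\<lambda>k. cnj (shift_minus_seq a Y k) * W k"])
  also have "suminf P - (suminf Q - Q 0) + cnj (shift_minus_seq a Y 0) * W 0 = suminf P - suminf Q"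
    by (simp add: shift_minus_seq_def Q_def)
  also have "\<dots> = (\<Sum>k. cnj (Y k) * (W (Suc k) - cnj a * W k))"
  proof -
    have "(\<lambda>k. P k - Q k) = (\<lambda>k. cnj (Y k) * (W (Suc k) - cnj a * W k))"
      by (auto simp: P_def Q_def algebra_simps)
    with sums_diff[OF P Q] show ?thesis by (metis sums_unique)
  qed
  finally show ?thesis .
qed

lemma exists_power_mult_le:
  fixes q C e :: real
  assumes "0 \<le> q" "q < 1" "0 < e"
  shows "\<exists>i. q ^ i * C \<le> e"
proof -
  have "(\<lambda>i. q ^ i * C) \<longlonglongrightarrow> 0 * C"
    using assms by (intro tendsto_mult_right LIMSEQ_power_zero) simp
  then obtain i where "norm (q ^ i * C) < e"
    using LIMSEQ_D[of _ 0 e] assms(3) by fastforce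
  then show ?thesis by (auto intro: order_trans[OF abs_ge_self] less_imp_le)
qed

context
  fixes q :: real and b :: complex
  assumes q_nonneg: "0 \<le> q" and q_less_1: "q < 1" and norm_b_le: "cmod b \<le> q"
begin

lemma norm_res_seq_Suc_le:
  "(cmod (res_seq b X (Suc k)))\<^sup>2 \<le> q * (cmod (res_seq b X k))\<^sup>2 + q\<^sup>2 / (1 - q) * (cmod (X (Suc k)))\<^sup>2"
proof -
  have "cmod b * cmod (res_seq b X k - X (Suc k)) \<le> q * (cmod (res_seq b X k) + cmod (X (Suc k)))"
    by (rule mult_mono[OF norm_b_le norm_triangle_ineq4]) (simp_all add: q_nonneg)
  then have "cmod (res_seq b X (Suc k)) \<le> q * (cmod (res_seq b X k) + cmod (X (Suc k)))"
    by (simp add: norm_mult)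
  then have "(cmod (res_seq b X (Suc k)))\<^sup>2 \<le> (q * (cmod (res_seq b X k) + cmod (X (Suc k))))\<^sup>2"
    by (simp add: power_mono)
  also have "\<dots> \<le> q * (cmod (res_seq b X k))\<^sup>2 + q\<^sup>2 / (1 - q) * (cmod (X (Suc k)))\<^sup>2"
    by (rule power2_mult_add_le[OF q_nonneg q_less_1])
  finally show ?thesis .
qed

lemma norm_res_seq_0_le: "(cmod (res_seq b X 0))\<^sup>2 \<le> q\<^sup>2 / (1 - q) * (cmod (X 0))\<^sup>2"
proof -
  have "(cmod (res_seq b X 0))\<^sup>2 \<le> (q * cmod (X 0))\<^sup>2"
    using norm_b_le by (simp add: norm_mult power_mono mult_right_mono)
  also have "\<dots> \<le> q\<^sup>2 / (1 - q) * (cmod (X 0))\<^sup>2"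
    using q_nonneg q_less_1 by (simp add: power_mult_distrib mult_right_mono field_simps)
  finally show ?thesis .
qed

lemma res_seq_l2_le:
  "(1 - q) * (\<Sum>k<n. (cmod (res_seq b X k))\<^sup>2) \<le> q\<^sup>2 / (1 - q) * (\<Sum>k<n. (cmod (X k))\<^sup>2)"
proof (cases n)
  case (Suc m)
  have "(1 - q) * (\<Sum>k<Suc m. (cmod (res_seq b X k))\<^sup>2)
      \<le> (cmod (res_seq b X 0))\<^sup>2 + (\<Sum>k<m. q\<^sup>2 / (1 - q) * (cmod (X (Suc k)))\<^sup>2)"
    using sum_le_of_forward_recursion[OF q_nonneg, of "\<lambda>k. (cmod (res_seq b X k))\<^sup>2"
        "\<lambda>k. q\<^sup>2 / (1 - q) * (cmod (X k))\<^sup>2" m] norm_res_seq_Suc_le[of X] by simp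
  also have "\<dots> \<le> q\<^sup>2 / (1 - q) * (\<Sum>k<Suc m. (cmod (X k))\<^sup>2)"
    unfolding sum.lessThan_Suc_shift distrib_left sum_distrib_left
    using norm_res_seq_0_le[of X] by linarith
  finally show ?thesis using Suc by simp
qed simp

lemma res_seq_l2:
  assumes "summable (\<lambda>k. (cmod (X k))\<^sup>2)"
  shows "summable (\<lambda>k. (cmod (res_seq b X k))\<^sup>2)"
proof (rule bounded_imp_summable)
  fix n
  have "(1 - q) * (\<Sum>k<Suc n. (cmod (res_seq b X k))\<^sup>2) \<le> q\<^sup>2 / (1 - q) * (\<Sum>k<Suc n. (cmod (X k))\<^sup>2)"
    by (rule res_seq_l2_le)
  also have "\<dots> \<le> q\<^sup>2 / (1 - q) * (\<Sum>k. (cmod (X k))\<^sup>2)"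
    using q_less_1 by (intro mult_left_mono sum_le_suminf assms) auto
  finally have "(\<Sum>k<Suc n. (cmod (res_seq b X k))\<^sup>2) \<le> q\<^sup>2 / (1 - q) * (\<Sum>k. (cmod (X k))\<^sup>2) / (1 - q)"
    using q_less_1 by (intro mult_imp_le_div_pos) (simp_all add: mult.commute)
  then show "(\<Sum>k\<le>n. (cmod (res_seq b X k))\<^sup>2) \<le> q\<^sup>2 / (1 - q) * (\<Sum>k. (cmod (X k))\<^sup>2) / (1 - q)"
    by (simp only: lessThan_Suc_atMost)
qed simp

lemma norm_res_seq_add_le:
  "(cmod (res_seq b X (j + i)))\<^sup>2
     \<le> q ^ i * (cmod (res_seq b X j))\<^sup>2 + q\<^sup>2 / (1 - q) * (\<Sum>k<i. (cmod (X (Suc (j + k))))\<^sup>2)"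
proof (induction i)
  case (Suc i)
  let ?M = "q\<^sup>2 / (1 - q)" and ?S = "\<Sum>k<i. (cmod (X (Suc (j + k))))\<^sup>2"
  have "(cmod (res_seq b X (j + Suc i)))\<^sup>2 \<le> q * (cmod (res_seq b X (j + i)))\<^sup>2 + ?M * (cmod (X (Suc (j + i))))\<^sup>2"
    using norm_res_seq_Suc_le[of X "j + i"] by simp
  also have "\<dots> \<le> q * (q ^ i * (cmod (res_seq b X j))\<^sup>2 + ?M * ?S) + ?M * (cmod (X (Suc (j + i))))\<^sup>2"
    using Suc q_nonneg by (simp add: mult_left_mono)
  also have "\<dots> \<le> q ^ Suc i * (cmod (res_seq b X j))\<^sup>2 + ?M * (?S + (cmod (X (Suc (j + i))))\<^sup>2)"
  proof -
    have "q * (?M * ?S) \<le> ?M * ?S"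
      using q_nonneg q_less_1 by (intro mult_left_le_one_le mult_nonneg_nonneg sum_nonneg) auto
    then show ?thesis by (simp add: algebra_simps)
  qed
  finally show ?case by simp
qed simp

lemma res_seq_tail_le:
  assumes H: "\<And>m. (\<Sum>k<m. (cmod (X k))\<^sup>2) \<le> H"
    and e: "\<And>n m. n \<ge> J \<Longrightarrow> (\<Sum>k<m. (cmod (X (n + k)))\<^sup>2) \<le> e"
  shows "(\<Sum>k<m. (cmod (res_seq b X (J + i + k)))\<^sup>2)
           \<le> (q ^ i * (q\<^sup>2 / (1 - q) * H / (1 - q)) + 2 * (q\<^sup>2 / (1 - q) * e)) / (1 - q)"
proof -
  define M where "M = q\<^sup>2 / (1 - q)"
  define p where "p k = (cmod (res_seq b X k))\<^sup>2" for k
  have M: "0 \<le> M" and q1: "0 < 1 - q"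
    using q_less_1 by (simp_all add: M_def)
  have "p J \<le> (\<Sum>k<Suc J. p k)"
    by (rule member_le_sum) (auto simp: p_def)
  also have "(1 - q) * (\<Sum>k<Suc J. p k) \<le> M * H"
    using res_seq_l2_le[of X "Suc J"] H[of "Suc J"] M unfolding p_def M_def
    by (meson mult_left_mono order_trans)
  then have "(\<Sum>k<Suc J. p k) \<le> M * H / (1 - q)"
    using q1 by (simp add: pos_le_divide_eq mult.commute)
  finally have pJ: "p J \<le> M * H / (1 - q)" .
  have "p (J + i) \<le> q ^ i * p J + M * (\<Sum>k<i. (cmod (X (Suc J + k)))\<^sup>2)"
    using norm_res_seq_add_le[of X J i] unfolding p_def M_def by simp
  also have "\<dots> \<le> q ^ i * (M * H / (1 - q)) + M * e"
    using pJ e[of "Suc J" i] M q_nonneg by (intro add_mono mult_left_mono) auto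
  finally have pJi: "p (J + i) \<le> q ^ i * (M * H / (1 - q)) + M * e" .
  have "(1 - q) * (\<Sum>k<Suc m. p (J + i + k))
      \<le> p (J + i) + (\<Sum>k<m. M * (cmod (X (Suc (J + i + k))))\<^sup>2)"
    using sum_le_of_forward_recursion[OF q_nonneg, of "\<lambda>k. p (J + i + k)" "\<lambda>k. M * (cmod (X (J + i + k)))\<^sup>2" m]
      norm_res_seq_Suc_le[of X] unfolding p_def M_def by simp
  also have "\<dots> \<le> q ^ i * (M * H / (1 - q)) + M * e + M * e"
  proof -
    have "M * (\<Sum>k<m. (cmod (X (Suc (J + i) + k)))\<^sup>2) \<le> M * e"
      using e[of "Suc (J + i)" m] M by (intro mult_left_mono) auto
    then show ?thesis using pJi by (simp add: sum_distrib_left[symmetric])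
  qed
  finally have "(\<Sum>k<Suc m. p (J + i + k)) \<le> (q ^ i * (M * H / (1 - q)) + 2 * (M * e)) / (1 - q)"
    using q1 by (simp add: mult_imp_le_div_pos mult.commute)
  moreover have "(\<Sum>k<m. p (J + i + k)) \<le> (\<Sum>k<Suc m. p (J + i + k))"
    by (simp add: p_def)
  ultimately have "(\<Sum>k<m. p (J + i + k)) \<le> (q ^ i * (M * H / (1 - q)) + 2 * (M * e)) / (1 - q)"
    by linarith
  then show ?thesis unfolding p_def M_def .
qed

lemma norm_cnj_power_Suc_mult_le:
  assumes "cmod v \<le> B"
  shows "cmod (cnj b ^ Suc i * v) \<le> B * q ^ i"
proof -
  have "cmod b ^ Suc i \<le> q ^ i"
    using power_mono[OF norm_b_le norm_ge_zero, of i] norm_b_le q_less_1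
    by (simp add: mult_left_le_one_le order_trans[OF mult_left_le_one_le])
  then show ?thesis
    using assms by (simp add: norm_mult norm_power mult_mono' mult.commute)
qed

lemma geometric_summable: "summable (\<lambda>i. B * q ^ i)"
  using q_nonneg q_less_1 by (intro summable_mult summable_geometric) simp

lemma res_adj_seq_summable:
  assumes "\<And>k. cmod (V k) \<le> B"
  shows "summable (\<lambda>i. cnj b ^ Suc i * V (j + i))"
  by (rule summable_comparison_test'[OF geometric_summable[of B]])
     (rule norm_cnj_power_Suc_mult_le[OF assms])

lemma norm_res_adj_seq_le:
  assumes "\<And>k. k \<ge> j \<Longrightarrow> cmod (V k) \<le> e"
  shows "cmod (res_adj_seq b V j) \<le> e / (1 - q)"
proof -
  have "cmod (res_adj_seq b V j) \<le> (\<Sum>i. e * q ^ i)"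
    unfolding res_adj_seq_def norm_minus_cancel
    by (intro norm_suminf_le geometric_summable norm_cnj_power_Suc_mult_le assms) simp
  also have "\<dots> = e / (1 - q)"
    using q_nonneg q_less_1 by (simp add: suminf_mult suminf_geometric summable_geometric)
  finally show ?thesis .
qed

lemma res_adj_seq_minus_partial_sum:
  assumes "\<And>k. cmod (V k) \<le> B"
  shows "- (\<Sum>i<n. cnj b ^ Suc i * V (j + i)) - res_adj_seq b V j = - (cnj b ^ n * res_adj_seq b V (j + n))"
proof -
  let ?f = "\<lambda>i. cnj b ^ Suc i * V (j + i)"
  have "(\<Sum>i. ?f (i + n)) = cnj b ^ n * (\<Sum>i. cnj b ^ Suc i * V (j + n + i))"
    by (subst suminf_mult[OF res_adj_seq_summable[OF assms], symmetric])
       (simp add: power_add mult_ac add_ac)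
  moreover have "suminf ?f = (\<Sum>i. ?f (i + n)) + (\<Sum>i<n. ?f i)"
    by (rule suminf_split_initial_segment[OF res_adj_seq_summable[OF assms]])
  ultimately show ?thesis by (simp add: res_adj_seq_def)
qed

lemma res_adj_seq_Suc:
  assumes "\<And>k. cmod (V k) \<le> B"
  shows "res_adj_seq b V j = cnj b * (res_adj_seq b V (Suc j) - V j)"
  using res_adj_seq_minus_partial_sum[OF assms, where n = 1 and j = j] by (simp add: algebra_simps)

lemma res_adj_seq_tendsto_zero:
  assumes "\<And>k. cmod (V k) \<le> B" and "V \<longlonglongrightarrow> 0"
  shows "res_adj_seq b V \<longlonglongrightarrow> 0"
proof (rule LIMSEQ_I)
  fix r :: real
  assume "0 < r"
  then have "0 < r * (1 - q) / 2" using q_less_1 by simp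
  then obtain N where N: "\<And>n. n \<ge> N \<Longrightarrow> cmod (V n) < r * (1 - q) / 2"
    using LIMSEQ_D[OF assms(2)] by (metis diff_zero)
  have "cmod (res_adj_seq b V n) < r" if "n \<ge> N" for n
  proof -
    have "cmod (res_adj_seq b V n) \<le> r * (1 - q) / 2 / (1 - q)"
      using N that by (intro norm_res_adj_seq_le less_imp_le) auto
    also have "\<dots> = r / 2" using q_less_1 by (simp add: field_simps)
    also have "\<dots> < r" using \<open>0 < r\<close> by simp
    finally show ?thesis .
  qed
  then show "\<exists>N. \<forall>n\<ge>N. norm (res_adj_seq b V n - 0) < r" by auto
qed

lemma norm_res_adj_seq_le_Suc:
  assumes "\<And>k. cmod (V k) \<le> B"
  shows "(cmod (res_adj_seq b V j))\<^sup>2 \<le> q * (cmod (res_adj_seq b V (Suc j)))\<^sup>2 + q\<^sup>2 / (1 - q) * (cmod (V j))\<^sup>2"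
proof -
  have "cmod b * cmod (res_adj_seq b V (Suc j) - V j) \<le> q * (cmod (res_adj_seq b V (Suc j)) + cmod (V j))"
    by (rule mult_mono[OF norm_b_le norm_triangle_ineq4]) (simp_all add: q_nonneg)
  then have "cmod (res_adj_seq b V j) \<le> q * (cmod (res_adj_seq b V (Suc j)) + cmod (V j))"
    by (subst res_adj_seq_Suc[OF assms]) (simp add: norm_mult)
  then have "(cmod (res_adj_seq b V j))\<^sup>2 \<le> (q * (cmod (res_adj_seq b V (Suc j)) + cmod (V j)))\<^sup>2"
    by (simp add: power_mono)
  also have "\<dots> \<le> q * (cmod (res_adj_seq b V (Suc j)))\<^sup>2 + q\<^sup>2 / (1 - q) * (cmod (V j))\<^sup>2"
    by (rule power2_mult_add_le[OF q_nonneg q_less_1])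
  finally show ?thesis .
qed

text \<open>The backward recursion only bounds an initial block by its successor, which is removed by
  letting the block length tend to infinity, using that \<open>res_adj_seq b V\<close> tends to \<open>0\<close>.\<close>

lemma res_adj_seq_tail_le:
  assumes B: "\<And>k. cmod (V k) \<le> B" and "V \<longlonglongrightarrow> 0"
    and T: "\<And>m. (\<Sum>k<m. (cmod (V (j + k)))\<^sup>2) \<le> T"
  shows "(1 - q) * (\<Sum>k<m. (cmod (res_adj_seq b V (j + k)))\<^sup>2) \<le> q\<^sup>2 / (1 - q) * T"
proof -
  let ?p = "\<lambda>k. (cmod (res_adj_seq b V (j + k)))\<^sup>2" and ?M = "q\<^sup>2 / (1 - q)"
  have M: "0 \<le> ?M" using q_less_1 by simp
  have "(\<lambda>n. q * ?p n + ?M * T) \<longlonglongrightarrow> q * 0 + ?M * T"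
  proof (intro tendsto_intros)
    have "(\<lambda>n. res_adj_seq b V (n + j)) \<longlonglongrightarrow> 0"
      by (rule LIMSEQ_ignore_initial_segment[OF res_adj_seq_tendsto_zero[OF assms(1,2)]])
    then show "(\<lambda>n. ?p n) \<longlonglongrightarrow> 0"
      using tendsto_power[OF tendsto_norm_zero, of _ _ 2] by (simp add: add.commute)
  qed
  moreover have "(1 - q) * (\<Sum>k<m. ?p k) \<le> q * ?p n + ?M * T" if "n \<ge> m" for n
  proof -
    have "(1 - q) * (\<Sum>k<m. ?p k) \<le> (1 - q) * (\<Sum>k<n. ?p k)"
      using that q_less_1 by (intro mult_left_mono sum_mono2) auto
    also have "\<dots> \<le> q * ?p n + (\<Sum>k<n. ?M * (cmod (V (j + k)))\<^sup>2)"
      using norm_res_adj_seq_le_Suc[OF B]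
      by (intro sum_le_of_backward_recursion[OF q_nonneg]) simp_all
    also have "\<dots> = q * ?p n + ?M * (\<Sum>k<n. (cmod (V (j + k)))\<^sup>2)"
      by (simp only: sum_distrib_left)
    also have "\<dots> \<le> q * ?p n + ?M * T"
      using T[of n] M by (intro add_left_mono mult_left_mono)
    finally show ?thesis .
  qed
  ultimately show ?thesis
    by (intro LIMSEQ_le_const[where a = "(1 - q) * (\<Sum>k<m. ?p k)"]) (simp_all, blast)
qed

lemma res_adj_seq_l2:
  assumes "summable (\<lambda>k. (cmod (V k))\<^sup>2)"
  shows "summable (\<lambda>k. (cmod (res_adj_seq b V k))\<^sup>2)"
proof -
  have V0: "V \<longlonglongrightarrow> 0" by (rule l2_tendsto_zero[OF assms])
  then obtain B where B: "\<And>k. cmod (V k) \<le> B"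
    using convergent_imp_Bseq[OF convergentI] BseqE by metis
  show ?thesis
  proof (rule bounded_imp_summable)
    fix n
    have "(1 - q) * (\<Sum>k<Suc n. (cmod (res_adj_seq b V (0 + k)))\<^sup>2) \<le> q\<^sup>2 / (1 - q) * (\<Sum>k. (cmod (V k))\<^sup>2)"
      using sum_le_suminf[OF assms] by (intro res_adj_seq_tail_le[OF B V0]) simp
    then have "(\<Sum>k<Suc n. (cmod (res_adj_seq b V k))\<^sup>2) \<le> q\<^sup>2 / (1 - q) * (\<Sum>k. (cmod (V k))\<^sup>2) / (1 - q)"
      using q_less_1 by (intro mult_imp_le_div_pos) (simp_all add: mult.commute)
    then show "(\<Sum>k\<le>n. (cmod (res_adj_seq b V k))\<^sup>2) \<le> q\<^sup>2 / (1 - q) * (\<Sum>k. (cmod (V k))\<^sup>2) / (1 - q)"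
      by (simp only: lessThan_Suc_atMost)
  qed simp
qed

lemma res_adj_seq_shift_adjoint:
  assumes "a * b = 1" and "\<And>k. cmod (V k) \<le> B"
  shows "res_adj_seq b V (Suc k) - cnj a * res_adj_seq b V k = V k"
proof -
  have "cnj a * res_adj_seq b V k = cnj (a * b) * (res_adj_seq b V (Suc k) - V k)"
    by (subst res_adj_seq_Suc[OF assms(2)]) (simp add: mult.assoc)
  then show ?thesis using assms(1) by simp
qed

lemma res_seq_adjoint:
  assumes "a * b = 1"
    and X: "summable (\<lambda>k. (cmod (X k))\<^sup>2)" and V: "summable (\<lambda>k. (cmod (V k))\<^sup>2)"
  shows "(\<Sum>k. cnj (res_seq b X k) * V k) = (\<Sum>k. cnj (X k) * res_adj_seq b V k)"
proof -
  obtain B where B: "\<And>k. cmod (V k) \<le> B"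
    using convergent_imp_Bseq[OF convergentI[OF l2_tendsto_zero[OF V]]] BseqE by metis
  have "(\<lambda>k. cnj (shift_minus_seq a (res_seq b X) k) * res_adj_seq b V k) sums
      (\<Sum>k. cnj (res_seq b X k) * (res_adj_seq b V (Suc k) - cnj a * res_adj_seq b V k))"
    by (intro suminf_shift_minus_adjoint res_seq_l2 res_adj_seq_l2 X V)
  then show ?thesis
    by (simp add: shift_minus_res_seq[OF assms(1)] res_adj_seq_shift_adjoint[OF assms(1) B] sums_iff)
qed

end

lemma res_seq_uniform_tail:
  fixes q H e :: real
  assumes q: "0 \<le> q" "q < 1" and "0 < e"
  obtains \<delta> i where "0 < \<delta>"
    and "\<And>b X J n m. cmod b \<le> q \<Longrightarrow> (\<And>m. (\<Sum>k<m. (cmod (X k))\<^sup>2) \<le> H)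
      \<Longrightarrow> (\<And>n m. n \<ge> J \<Longrightarrow> (\<Sum>k<m. (cmod (X (n + k)))\<^sup>2) \<le> \<delta>) \<Longrightarrow> J + i \<le> n
      \<Longrightarrow> (\<Sum>k<m. (cmod (res_seq b X (n + k)))\<^sup>2) \<le> e"
proof -
  define M where "M = q\<^sup>2 / (1 - q)"
  have M: "0 \<le> M" and q1: "0 < 1 - q"
    using q by (simp_all add: M_def)
  define \<delta> where "\<delta> = e * (1 - q) / (4 * M + 1)"
  have "2 * (M * \<delta>) / (1 - q) = 2 * M * e / (4 * M + 1)"
    using q1 by (simp add: \<delta>_def)
  also have "\<dots> \<le> e / 2"
    using \<open>e > 0\<close> M by (simp add: field_simps)
  finally have \<delta>: "0 < \<delta>" "2 * (M * \<delta>) / (1 - q) \<le> e / 2"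
    using \<open>e > 0\<close> q1 M by (simp_all add: \<delta>_def)
  obtain i where i: "q ^ i * (M * H / (1 - q) / (1 - q)) \<le> e / 2"
    using exists_power_mult_le[OF q, of "e / 2" "M * H / (1 - q) / (1 - q)"] \<open>e > 0\<close> by auto
  have "(\<Sum>k<m. (cmod (res_seq b X (n + k)))\<^sup>2) \<le> e"
    if b: "cmod b \<le> q" and H: "\<And>m. (\<Sum>k<m. (cmod (X k))\<^sup>2) \<le> H"
      and tail: "\<And>n m. n \<ge> J \<Longrightarrow> (\<Sum>k<m. (cmod (X (n + k)))\<^sup>2) \<le> \<delta>" and n: "J + i \<le> n"
    for b X J n m
  proof -
    have "(\<Sum>k<m. (cmod (res_seq b X (n - i + i + k)))\<^sup>2)
        \<le> (q ^ i * (M * H / (1 - q)) + 2 * (M * \<delta>)) / (1 - q)"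
      unfolding M_def using n by (intro res_seq_tail_le[OF q b H tail]) auto
    also have "\<dots> = q ^ i * (M * H / (1 - q) / (1 - q)) + 2 * (M * \<delta>) / (1 - q)"
      by (simp add: add_divide_distrib)
    also have "\<dots> \<le> e / 2 + e / 2"
      using i \<delta>(2) by (rule add_mono)
    finally show ?thesis using n by simp
  qed
  with \<delta>(1) show ?thesis by (rule that)
qed

lemma res_adj_seq_uniform_tail:
  fixes q e :: real
  assumes q: "0 \<le> q" "q < 1" and "0 < e"
  obtains \<delta> where "0 < \<delta>"
    and "\<And>b V B j m. cmod b \<le> q \<Longrightarrow> (\<And>k. cmod (V k) \<le> B) \<Longrightarrow> V \<longlonglongrightarrow> 0
      \<Longrightarrow> (\<And>m. (\<Sum>k<m. (cmod (V (j + k)))\<^sup>2) \<le> \<delta>)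
      \<Longrightarrow> (\<Sum>k<m. (cmod (res_adj_seq b V (j + k)))\<^sup>2) \<le> e"
proof -
  define M where "M = q\<^sup>2 / (1 - q)"
  have M: "0 \<le> M" and q1: "0 < 1 - q"
    using q by (simp_all add: M_def)
  define \<delta> where "\<delta> = e * (1 - q) / (M + 1)"
  have "M * \<delta> / (1 - q) = M * e / (M + 1)"
    using q1 by (simp add: \<delta>_def)
  also have "\<dots> \<le> e"
    using \<open>e > 0\<close> M by (simp add: field_simps)
  finally have \<delta>: "0 < \<delta>" "M * \<delta> / (1 - q) \<le> e"
    using \<open>e > 0\<close> q1 M by (simp_all add: \<delta>_def)
  have "(\<Sum>k<m. (cmod (res_adj_seq b V (j + k)))\<^sup>2) \<le> e"
    if b: "cmod b \<le> q" and B: "\<And>k. cmod (V k) \<le> B" and V0: "V \<longlonglongrightarrow> 0"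
      and tail: "\<And>m. (\<Sum>k<m. (cmod (V (j + k)))\<^sup>2) \<le> \<delta>"
    for b V B j m
  proof -
    have "(1 - q) * (\<Sum>k<m. (cmod (res_adj_seq b V (j + k)))\<^sup>2) \<le> M * \<delta>"
      unfolding M_def by (rule res_adj_seq_tail_le[OF q b B V0 tail])
    then have "(\<Sum>k<m. (cmod (res_adj_seq b V (j + k)))\<^sup>2) \<le> M * \<delta> / (1 - q)"
      using q1 by (intro mult_imp_le_div_pos) (simp_all add: mult.commute)
    with \<delta>(2) show ?thesis by linarith
  qed
  with \<delta>(1) show ?thesis by (rule that)
qed

lemma tendsto_zero_iff_eventually_le:
  fixes X :: "nat \<Rightarrow> real"
  assumes "\<And>n. 0 \<le> X n"
  shows "X \<longlonglongrightarrow> 0 \<longleftrightarrow> (\<forall>e>0. \<exists>N. \<forall>n\<ge>N. X n \<le> e)"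
proof
  assume "X \<longlonglongrightarrow> 0"
  then show "\<forall>e>0. \<exists>N. \<forall>n\<ge>N. X n \<le> e"
    using assms by (fastforce dest: LIMSEQ_D intro: less_imp_le)
next
  assume H: "\<forall>e>0. \<exists>N. \<forall>n\<ge>N. X n \<le> e"
  show "X \<longlonglongrightarrow> 0"
  proof (rule LIMSEQ_I)
    fix r :: real
    assume "0 < r"
    then obtain N where "\<forall>n\<ge>N. X n \<le> r / 2" using H half_gt_zero by blast
    with \<open>0 < r\<close> assms show "\<exists>N. \<forall>n\<ge>N. norm (X n - 0) < r" by force
  qed
qed

section \<open>Algebras of functions modulo a filter\<close>

text \<open>\<open>A\<close> is realised as bounded functions on \<open>\<real>\<close> modulo the filter \<open>F\<close>, which is closed under
  countable intersections: \<open>ev a\<close> is a representative of \<open>a\<close> and the norm is the \<open>F\<close>-essential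
  supremum. \<open>C([0,1])\<close> is the instance \<open>F = principal {0..1}\<close> and \<open>L\<^sup>\<infinity>(0,1)\<close> the instance
  "almost everywhere on \<open>(0,1)\<close>".\<close>

locale function_calg =
  fixes A :: "'a calg" and F :: "real filter" and ev :: "'a \<Rightarrow> real \<Rightarrow> complex"
  assumes eventually_all_nat: "\<And>P. (\<And>n::nat. eventually (P n) F) \<Longrightarrow> eventually (\<lambda>t. \<forall>n. P n t) F"
    and ev_inject: "\<And>a b. eventually (\<lambda>t. ev a t = ev b t) F \<Longrightarrow> a = b"
    and ev_add: "\<And>a b. eventually (\<lambda>t. ev (c_add A a b) t = ev a t + ev b t) F"
    and ev_mul: "\<And>a b. eventually (\<lambda>t. ev (c_mul A a b) t = ev a t * ev b t) F"
    and ev_neg: "\<And>a. eventually (\<lambda>t. ev (c_neg A a) t = - ev a t) F"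
    and ev_star: "\<And>a. eventually (\<lambda>t. ev (c_star A a) t = cnj (ev a t)) F"
    and ev_zero: "eventually (\<lambda>t. ev (c_zero A) t = 0) F"
    and ev_one: "eventually (\<lambda>t. ev (c_one A) t = 1) F"
    and c_norm_eq: "\<And>a. c_norm A a = Inf {C. 0 \<le> C \<and> eventually (\<lambda>t. cmod (ev a t) \<le> C) F}"
    and ev_bounded: "\<And>a. \<exists>C. eventually (\<lambda>t. cmod (ev a t) \<le> C) F"
    and ev_complete: "\<And>(a :: nat \<Rightarrow> 'a) g.
          (\<And>e. e > 0 \<Longrightarrow> \<exists>N. \<forall>n\<ge>N. eventually (\<lambda>t. cmod (ev (a n) t - g t) \<le> e) F)
          \<Longrightarrow> \<exists>s. eventually (\<lambda>t. ev s t = g t) F"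
begin

lemma eventually_all_ge:
  assumes "\<And>n::nat. n \<ge> N \<Longrightarrow> eventually (P n) F"
  shows "eventually (\<lambda>t. \<forall>n\<ge>N. P n t) F"
proof -
  have "eventually (\<lambda>t. n \<ge> N \<longrightarrow> P n t) F" for n
    by (cases "n \<ge> N") (auto intro: eventually_mono[OF assms])
  then show ?thesis by (rule eventually_all_nat)
qed

lemma eventually_tendsto_of_uniform:
  fixes f :: "nat \<Rightarrow> real \<Rightarrow> complex"
  assumes "\<And>e. e > 0 \<Longrightarrow> \<exists>N. \<forall>n\<ge>N. eventually (\<lambda>t. cmod (f n t - g t) \<le> e) F"
  shows "eventually (\<lambda>t. (\<lambda>n. f n t) \<longlonglongrightarrow> g t) F"
proof -
  have "\<forall>m. \<exists>N. \<forall>n\<ge>N. eventually (\<lambda>t. cmod (f n t - g t) \<le> 1 / Suc m) F"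
    using assms by simp
  then obtain N where N: "\<And>m n. n \<ge> N m \<Longrightarrow> eventually (\<lambda>t. cmod (f n t - g t) \<le> 1 / Suc m) F"
    by metis
  have "eventually (\<lambda>t. \<forall>m. \<forall>n\<ge>N m. cmod (f n t - g t) \<le> 1 / Suc m) F"
    by (intro eventually_all_nat eventually_all_ge N)
  then show ?thesis
  proof eventually_elim
    case (elim t)
    show ?case
    proof (rule LIMSEQ_I)
      fix r :: real
      assume "r > 0"
      then obtain m where "1 / Suc m < r" using nat_approx_posE by blast
      with elim show "\<exists>N. \<forall>n\<ge>N. norm (f n t - g t) < r"
        by (auto intro: le_less_trans)
    qed
  qed
qed

definition representable :: "(real \<Rightarrow> complex) \<Rightarrow> bool" where
  "representable f \<longleftrightarrow> (\<exists>a. eventually (\<lambda>t. ev a t = f t) F)"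

definition elem_of :: "(real \<Rightarrow> complex) \<Rightarrow> 'a" where
  "elem_of f = (SOME a. eventually (\<lambda>t. ev a t = f t) F)"

lemma ev_elem_of: "representable f \<Longrightarrow> eventually (\<lambda>t. ev (elem_of f) t = f t) F"
  unfolding representable_def elem_of_def by (rule someI_ex)

lemma representable_ev: "representable (ev a)"
  unfolding representable_def by (rule exI[of _ a]) simp

lemma representable_add:
  assumes "representable f" "representable g"
  shows "representable (\<lambda>t. f t + g t)"
proof -
  obtain a b where "eventually (\<lambda>t. ev a t = f t) F" "eventually (\<lambda>t. ev b t = g t) F"
    using assms unfolding representable_def by blast
  with ev_add[of a b] have "eventually (\<lambda>t. ev (c_add A a b) t = f t + g t) F"
    by eventually_elim simp
  then show ?thesis unfolding representable_def by blast
qed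

lemma representable_mult:
  assumes "representable f" "representable g"
  shows "representable (\<lambda>t. f t * g t)"
proof -
  obtain a b where "eventually (\<lambda>t. ev a t = f t) F" "eventually (\<lambda>t. ev b t = g t) F"
    using assms unfolding representable_def by blast
  with ev_mul[of a b] have "eventually (\<lambda>t. ev (c_mul A a b) t = f t * g t) F"
    by eventually_elim simp
  then show ?thesis unfolding representable_def by blast
qed

lemma representable_minus:
  assumes "representable f"
  shows "representable (\<lambda>t. - f t)"
proof -
  obtain a where "eventually (\<lambda>t. ev a t = f t) F"
    using assms unfolding representable_def by blast
  with ev_neg[of a] have "eventually (\<lambda>t. ev (c_neg A a) t = - f t) F"
    by eventually_elim simp
  then show ?thesis unfolding representable_def by blast
qed

lemma representable_cnj:
  assumes "representable f"
  shows "representable (\<lambda>t. cnj (f t))"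
proof -
  obtain a where "eventually (\<lambda>t. ev a t = f t) F"
    using assms unfolding representable_def by blast
  with ev_star[of a] have "eventually (\<lambda>t. ev (c_star A a) t = cnj (f t)) F"
    by eventually_elim simp
  then show ?thesis unfolding representable_def by blast
qed

lemma representable_0: "representable (\<lambda>t. 0)"
  unfolding representable_def using ev_zero by blast

lemma representable_1: "representable (\<lambda>t. 1)"
  unfolding representable_def using ev_one by blast

lemma representable_diff:
  "representable f \<Longrightarrow> representable g \<Longrightarrow> representable (\<lambda>t. f t - g t)"
  using representable_add[of f "\<lambda>t. - g t"] representable_minus[of g] by simp

lemma representable_sum:
  "(\<And>i. i \<in> I \<Longrightarrow> representable (f i)) \<Longrightarrow> representable (\<lambda>t. \<Sum>i\<in>I. f i t)"
  by (induction I rule: infinite_finite_induct) (auto intro: representable_0 representable_add)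

lemma representable_power: "representable f \<Longrightarrow> representable (\<lambda>t. f t ^ n)"
  by (induction n) (auto intro: representable_1 representable_mult)

lemma representable_uniform_limit:
  fixes f :: "nat \<Rightarrow> real \<Rightarrow> complex"
  assumes "\<And>n. representable (f n)"
    and "\<And>e. e > 0 \<Longrightarrow> \<exists>N. \<forall>n\<ge>N. eventually (\<lambda>t. cmod (f n t - g t) \<le> e) F"
  shows "representable g"
proof -
  have "\<exists>N. \<forall>n\<ge>N. eventually (\<lambda>t. cmod (ev (elem_of (f n)) t - g t) \<le> e) F" if e: "e > 0" for e
  proof -
    obtain N where N: "\<And>n. n \<ge> N \<Longrightarrow> eventually (\<lambda>t. cmod (f n t - g t) \<le> e) F"
      using assms(2)[OF e] by blast
    have "eventually (\<lambda>t. cmod (ev (elem_of (f n)) t - g t) \<le> e) F" if "n \<ge> N" for n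
      using ev_elem_of[OF assms(1)[of n]] N[OF that] by eventually_elim simp
    then show ?thesis by blast
  qed
  then show ?thesis
    unfolding representable_def by (rule ev_complete)
qed

lemma c_norm_set_nonempty: "{C. 0 \<le> C \<and> eventually (\<lambda>t. cmod (ev a t) \<le> C) F} \<noteq> {}"
proof -
  obtain C where "eventually (\<lambda>t. cmod (ev a t) \<le> C) F"
    using ev_bounded by blast
  then have "eventually (\<lambda>t. cmod (ev a t) \<le> max C 0) F"
    by eventually_elim simp
  then show ?thesis by force
qed

lemma c_norm_nonneg: "0 \<le> c_norm A a"
  unfolding c_norm_eq using c_norm_set_nonempty[of a] by (intro cInf_greatest) blast+

lemma c_norm_le_iff:
  assumes "0 \<le> e"
  shows "c_norm A a \<le> e \<longleftrightarrow> eventually (\<lambda>t. cmod (ev a t) \<le> e) F"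
proof
  let ?S = "{C. 0 \<le> C \<and> eventually (\<lambda>t. cmod (ev a t) \<le> C) F}"
  assume le: "c_norm A a \<le> e"
  have "eventually (\<lambda>t. cmod (ev a t) \<le> e + 1 / Suc m) F" for m
  proof -
    have "0 < 1 / Suc m" by simp
    then have "Inf ?S < e + 1 / Suc m"
      using le unfolding c_norm_eq by linarith
    then obtain C where "C \<in> ?S" "C < e + 1 / Suc m"
      using c_norm_set_nonempty[of a] by (meson cInf_lessD)
    then show ?thesis by (auto elim!: eventually_mono)
  qed
  then have "eventually (\<lambda>t. \<forall>m. cmod (ev a t) \<le> e + 1 / Suc m) F"
    by (rule eventually_all_nat)
  then show "eventually (\<lambda>t. cmod (ev a t) \<le> e) F"
  proof eventually_elim
    case (elim t)
    show ?case
    proof (rule field_le_epsilon)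
      fix d :: real
      assume "d > 0"
      then obtain m where "1 / Suc m < d" using nat_approx_posE by blast
      with elim[rule_format, of m] show "cmod (ev a t) \<le> e + d" by simp
    qed
  qed
next
  assume "eventually (\<lambda>t. cmod (ev a t) \<le> e) F"
  with assms show "c_norm A a \<le> e"
    unfolding c_norm_eq by (intro cInf_lower) (auto intro: bdd_belowI[of _ 0])
qed

lemma eventually_norm_ev_le_c_norm: "eventually (\<lambda>t. cmod (ev a t) \<le> c_norm A a) F"
  using c_norm_le_iff[OF c_norm_nonneg] by blast

lemma eventually_ev_psum: "eventually (\<lambda>t. \<forall>n. ev (psum A f n) t = (\<Sum>k<n. ev (f k) t)) F"
proof (rule eventually_all_nat)
  fix n
  show "eventually (\<lambda>t. ev (psum A f n) t = (\<Sum>k<n. ev (f k) t)) F"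
  proof (induction n)
    case 0
    show ?case using ev_zero by simp
  next
    case (Suc n)
    with ev_add[of "psum A f n" "f n"] show ?case by eventually_elim simp
  qed
qed

lemma conv_to_iff:
  "conv_to A f s \<longleftrightarrow> (\<forall>e>0. \<exists>N. \<forall>n\<ge>N. eventually (\<lambda>t. cmod ((\<Sum>k<n. ev (f k) t) - ev s t) \<le> e) F)"
proof -
  let ?d = "\<lambda>n. c_add A (psum A f n) (c_neg A s)"
  have "c_norm A (?d n) \<le> e \<longleftrightarrow> eventually (\<lambda>t. cmod ((\<Sum>k<n. ev (f k) t) - ev s t) \<le> e) F"
    if "0 \<le> e" for n e
  proof -
    have "eventually (\<lambda>t. ev (?d n) t = (\<Sum>k<n. ev (f k) t) - ev s t) F"
      using eventually_ev_psum[of f] ev_add[of "psum A f n" "c_neg A s"] ev_neg[of s]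
      by eventually_elim simp
    then have "eventually (\<lambda>t. cmod (ev (?d n) t) \<le> e) F
        \<longleftrightarrow> eventually (\<lambda>t. cmod ((\<Sum>k<n. ev (f k) t) - ev s t) \<le> e) F"
      by (intro eventually_subst) (auto elim: eventually_mono)
    with c_norm_le_iff[OF that] show ?thesis by simp
  qed
  then show ?thesis
    unfolding conv_to_def by (subst tendsto_zero_iff_eventually_le) (auto simp: c_norm_nonneg)
qed

lemma conv_to_sums:
  assumes "conv_to A f s"
  shows "eventually (\<lambda>t. (\<lambda>k. ev (f k) t) sums ev s t) F"
  unfolding sums_def using assms unfolding conv_to_iff
  by (intro eventually_tendsto_of_uniform[of "\<lambda>n t. \<Sum>k<n. ev (f k) t"]) blast

lemma conv_to_unique:
  assumes "conv_to A f s" "conv_to A f s'"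
  shows "s = s'"
proof (rule ev_inject)
  from conv_to_sums[OF assms(1)] conv_to_sums[OF assms(2)]
  show "eventually (\<lambda>t. ev s t = ev s' t) F"
    by eventually_elim (rule sums_unique2)
qed

definition uniform_tails :: "(nat \<Rightarrow> real \<Rightarrow> real) \<Rightarrow> bool" where
  "uniform_tails h \<longleftrightarrow> (\<forall>e>0. \<exists>N. eventually (\<lambda>t. \<forall>n\<ge>N. \<forall>m. (\<Sum>k<m. h (n + k) t) \<le> e) F)"

lemma uniform_tails_cong:
  assumes "eventually (\<lambda>t. \<forall>k. h k t = h' k t) F" "uniform_tails h"
  shows "uniform_tails h'"
  unfolding uniform_tails_def
proof (intro allI impI)
  fix e :: real
  assume "e > 0"
  then obtain N where "eventually (\<lambda>t. \<forall>n\<ge>N. \<forall>m. (\<Sum>k<m. h (n + k) t) \<le> e) F"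
    using assms(2) unfolding uniform_tails_def by blast
  with assms(1) have "eventually (\<lambda>t. \<forall>n\<ge>N. \<forall>m. (\<Sum>k<m. h' (n + k) t) \<le> e) F"
    by eventually_elim simp
  then show "\<exists>N. eventually (\<lambda>t. \<forall>n\<ge>N. \<forall>m. (\<Sum>k<m. h' (n + k) t) \<le> e) F" ..
qed

lemma uniform_tails_mean:
  assumes "uniform_tails f" "uniform_tails g"
  shows "uniform_tails (\<lambda>k t. (f k t + g k t) / 2)"
  unfolding uniform_tails_def
proof (intro allI impI)
  fix e :: real
  assume "e > 0"
  obtain N1 where "eventually (\<lambda>t. \<forall>n\<ge>N1. \<forall>m. (\<Sum>k<m. f (n + k) t) \<le> e) F"
    using assms(1) \<open>e > 0\<close> unfolding uniform_tails_def by blast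
  moreover obtain N2 where "eventually (\<lambda>t. \<forall>n\<ge>N2. \<forall>m. (\<Sum>k<m. g (n + k) t) \<le> e) F"
    using assms(2) \<open>e > 0\<close> unfolding uniform_tails_def by blast
  ultimately have "eventually (\<lambda>t. \<forall>n\<ge>max N1 N2. \<forall>m. (\<Sum>k<m. (f (n + k) t + g (n + k) t) / 2) \<le> e) F"
  proof eventually_elim
    case (elim t)
    show ?case
    proof (intro allI impI)
      fix n m
      assume "max N1 N2 \<le> n"
      with elim have "(\<Sum>k<m. f (n + k) t) \<le> e" "(\<Sum>k<m. g (n + k) t) \<le> e" by auto
      then show "(\<Sum>k<m. (f (n + k) t + g (n + k) t) / 2) \<le> e"
        by (simp add: sum_divide_distrib[symmetric] sum.distrib)
    qed
  qed
  then show "\<exists>N. eventually (\<lambda>t. \<forall>n\<ge>N. \<forall>m. (\<Sum>k<m. (f (n + k) t + g (n + k) t) / 2) \<le> e) F" ..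
qed

lemma uniform_convergence_of_uniform_tails:
  assumes B: "eventually (\<lambda>t. \<forall>k. cmod (u k t) \<le> h k t) F" and U: "uniform_tails h" and "e > 0"
  shows "\<exists>N. \<forall>n\<ge>N. eventually (\<lambda>t. cmod ((\<Sum>k<n. u k t) - (\<Sum>k. u k t)) \<le> e) F"
proof -
  obtain N where "eventually (\<lambda>t. \<forall>n\<ge>N. \<forall>m. (\<Sum>k<m. h (n + k) t) \<le> e) F"
    using U \<open>e > 0\<close> unfolding uniform_tails_def by blast
  with B have "eventually (\<lambda>t. \<forall>n\<ge>N. cmod ((\<Sum>k<n. u k t) - (\<Sum>k. u k t)) \<le> e) F"
  proof eventually_elim
    case (elim t)
    then have h: "0 \<le> h k t" for k by (meson norm_ge_zero order_trans)
    have sh: "summable (\<lambda>k. h k t)"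
    proof (rule bounded_imp_summable[OF h])
      fix n
      have "(\<Sum>k\<le>n. h k t) \<le> (\<Sum>k<N + Suc n. h k t)"
        by (intro sum_mono2) (auto simp: h)
      also have "\<dots> = (\<Sum>k<N. h k t) + (\<Sum>k<Suc n. h (N + k) t)"
        by (rule sum_lessThan_add)
      also have "\<dots> \<le> (\<Sum>k<N. h k t) + e"
        using elim(2) by (intro add_left_mono) blast
      finally show "(\<Sum>k\<le>n. h k t) \<le> (\<Sum>k<N. h k t) + e" .
    qed
    show ?case
    proof (intro allI impI)
      fix n
      assume "n \<ge> N"
      have sh': "summable (\<lambda>k. h (k + n) t)"
        using sh by (rule summable_ignore_initial_segment)
      have su: "summable (\<lambda>k. u k t)"
        by (rule summable_comparison_test'[OF sh, where N = 0]) (use elim in simp)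
      have "cmod ((\<Sum>k<n. u k t) - (\<Sum>k. u k t)) = cmod (\<Sum>k. u (k + n) t)"
        using suminf_split_initial_segment[OF su, of n] by (simp add: norm_minus_commute)
      also have "\<dots> \<le> (\<Sum>k. h (k + n) t)"
        by (rule norm_suminf_le[OF _ sh']) (use elim in simp)
      also have "\<dots> \<le> e"
        using elim(2) \<open>n \<ge> N\<close> by (intro suminf_le_const[OF sh']) (simp add: add.commute[of _ n])
      finally show "cmod ((\<Sum>k<n. u k t) - (\<Sum>k. u k t)) \<le> e" .
    qed
  qed
  then show ?thesis
    by (intro exI[of _ N] allI impI) (auto elim: eventually_mono)
qed

lemma conv_to_exists:
  assumes "eventually (\<lambda>t. \<forall>k. cmod (ev (f k) t) \<le> h k t) F" and "uniform_tails h"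
  shows "\<exists>s. conv_to A f s"
proof -
  let ?g = "\<lambda>t. \<Sum>k. ev (f k) t"
  have unif: "\<exists>N. \<forall>n\<ge>N. eventually (\<lambda>t. cmod ((\<Sum>k<n. ev (f k) t) - ?g t) \<le> e) F"
    if "e > 0" for e
    by (rule uniform_convergence_of_uniform_tails[OF assms that])
  have "\<exists>N. \<forall>n\<ge>N. eventually (\<lambda>t. cmod (ev (psum A f n) t - ?g t) \<le> e) F" if "e > 0" for e
  proof -
    obtain N where N: "\<forall>n\<ge>N. eventually (\<lambda>t. cmod ((\<Sum>k<n. ev (f k) t) - ?g t) \<le> e) F"
      using unif[OF \<open>e > 0\<close>] by blast
    have "eventually (\<lambda>t. cmod (ev (psum A f n) t - ?g t) \<le> e) F" if "n \<ge> N" for n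
      using eventually_ev_psum[of f] N[rule_format, OF that] by eventually_elim simp
    then show ?thesis by blast
  qed
  then obtain s where s: "eventually (\<lambda>t. ev s t = ?g t) F"
    using ev_complete[of "psum A f" ?g] by blast
  have "conv_to A f s"
    unfolding conv_to_iff
  proof (intro allI impI)
    fix e :: real
    assume "e > 0"
    then obtain N where N: "\<forall>n\<ge>N. eventually (\<lambda>t. cmod ((\<Sum>k<n. ev (f k) t) - ?g t) \<le> e) F"
      using unif by blast
    have "eventually (\<lambda>t. cmod ((\<Sum>k<n. ev (f k) t) - ev s t) \<le> e) F" if "n \<ge> N" for n
      using s N[rule_format, OF that] by eventually_elim simp
    then show "\<exists>N. \<forall>n\<ge>N. eventually (\<lambda>t. cmod ((\<Sum>k<n. ev (f k) t) - ev s t) \<le> e) F" by blast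
  qed
  then show ?thesis ..
qed

subsection \<open>The module \<open>H\<^sub>A\<close>\<close>

lemma eventually_ev_inner_terms:
  fixes x y :: "nat \<Rightarrow> 'a"
  shows "eventually (\<lambda>t. \<forall>k. ev (c_mul A (c_star A (x k)) (y k)) t = cnj (ev (x k) t) * ev (y k) t) F"
proof (rule eventually_all_nat)
  fix k
  from ev_mul[of "c_star A (x k)" "y k"] ev_star[of "x k"]
  show "eventually (\<lambda>t. ev (c_mul A (c_star A (x k)) (y k)) t = cnj (ev (x k) t) * ev (y k) t) F"
    by eventually_elim simp
qed

lemma HA_iff_uniform_tails: "x \<in> HA A \<longleftrightarrow> uniform_tails (\<lambda>k t. (cmod (ev (x k) t))\<^sup>2)"
proof
  let ?f = "\<lambda>k. c_mul A (c_star A (x k)) (x k)"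
  assume "x \<in> HA A"
  then obtain s where s: "conv_to A ?f s"
    unfolding HA_def by blast
  show "uniform_tails (\<lambda>k t. (cmod (ev (x k) t))\<^sup>2)"
    unfolding uniform_tails_def
  proof (intro allI impI)
    fix e :: real
    assume "e > 0"
    then obtain N where "\<forall>n\<ge>N. eventually (\<lambda>t. cmod ((\<Sum>k<n. ev (?f k) t) - ev s t) \<le> e / 2) F"
      using s unfolding conv_to_iff by (meson half_gt_zero)
    then have "eventually (\<lambda>t. \<forall>n\<ge>N. cmod ((\<Sum>k<n. ev (?f k) t) - ev s t) \<le> e / 2) F"
      by (intro eventually_all_ge) blast
    with eventually_ev_inner_terms[of x x]
    have "eventually (\<lambda>t. \<forall>n\<ge>N. \<forall>m. (\<Sum>k<m. (cmod (ev (x (n + k)) t))\<^sup>2) \<le> e) F"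
    proof eventually_elim
      case (elim t)
      define S where "S n = (\<Sum>k<n. ev (?f k) t)" for n
      show ?case
      proof (intro allI impI)
        fix n m
        assume "N \<le> n"
        have "S (n + m) - S n = (\<Sum>k<m. cnj (ev (x (n + k)) t) * ev (x (n + k)) t)"
          using elim(1) by (simp add: S_def sum_lessThan_add)
        also have "\<dots> = of_real (\<Sum>k<m. (cmod (ev (x (n + k)) t))\<^sup>2)"
          by (simp only: cnj_mult_self of_real_sum)
        finally have "(\<Sum>k<m. (cmod (ev (x (n + k)) t))\<^sup>2) = cmod (S (n + m) - S n)"
          by (simp only: norm_of_real abs_of_nonneg[OF sum_nonneg] zero_le_power2)
        also have "\<dots> = cmod ((S (n + m) - ev s t) - (S n - ev s t))"
          by simp
        also have "\<dots> \<le> e / 2 + e / 2"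
        proof -
          have "cmod (S (n + m) - ev s t) \<le> e / 2" "cmod (S n - ev s t) \<le> e / 2"
            using elim(2) \<open>N \<le> n\<close> unfolding S_def by auto
          then show ?thesis
            using norm_triangle_ineq4[of "S (n + m) - ev s t" "S n - ev s t"] by linarith
        qed
        finally show "(\<Sum>k<m. (cmod (ev (x (n + k)) t))\<^sup>2) \<le> e" by simp
      qed
    qed
    then show "\<exists>N. eventually (\<lambda>t. \<forall>n\<ge>N. \<forall>m. (\<Sum>k<m. (cmod (ev (x (n + k)) t))\<^sup>2) \<le> e) F" ..
  qed
next
  assume "uniform_tails (\<lambda>k t. (cmod (ev (x k) t))\<^sup>2)"
  moreover have "eventually (\<lambda>t. \<forall>k. cmod (ev (c_mul A (c_star A (x k)) (x k)) t) \<le> (cmod (ev (x k) t))\<^sup>2) F"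
    using eventually_ev_inner_terms[of x x] by eventually_elim (simp add: norm_mult power2_eq_square)
  ultimately have "\<exists>s. conv_to A (\<lambda>k. c_mul A (c_star A (x k)) (x k)) s"
    by (intro conv_to_exists)
  then show "x \<in> HA A"
    unfolding HA_def by simp
qed

lemma conv_to_inner_A:
  assumes "x \<in> HA A" "y \<in> HA A"
  shows "conv_to A (\<lambda>k. c_mul A (c_star A (x k)) (y k)) (inner_A A x y)"
proof -
  have "eventually (\<lambda>t. \<forall>k. cmod (ev (c_mul A (c_star A (x k)) (y k)) t)
      \<le> ((cmod (ev (x k) t))\<^sup>2 + (cmod (ev (y k) t))\<^sup>2) / 2) F"
    using eventually_ev_inner_terms[of x y]
  proof eventually_elim
    case (elim t)
    show ?case
    proof
      fix k
      show "cmod (ev (c_mul A (c_star A (x k)) (y k)) t) \<le> ((cmod (ev (x k) t))\<^sup>2 + (cmod (ev (y k) t))\<^sup>2) / 2"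
        using elim norm_cnj_mult_le[of "ev (x k) t" "ev (y k) t"] by simp
    qed
  qed
  moreover have "uniform_tails (\<lambda>k t. ((cmod (ev (x k) t))\<^sup>2 + (cmod (ev (y k) t))\<^sup>2) / 2)"
    using assms unfolding HA_iff_uniform_tails by (rule uniform_tails_mean)
  ultimately have "\<exists>s. conv_to A (\<lambda>k. c_mul A (c_star A (x k)) (y k)) s"
    by (rule conv_to_exists)
  then obtain s where s: "conv_to A (\<lambda>k. c_mul A (c_star A (x k)) (y k)) s" ..
  have "inner_A A x y = s"
    unfolding inner_A_def
  proof (rule the_equality)
    fix s'
    assume "conv_to A (\<lambda>k. c_mul A (c_star A (x k)) (y k)) s'"
    then show "s' = s" using s by (rule conv_to_unique)
  qed (rule s)
  with s show ?thesis by simp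
qed

lemma eventually_sums_inner_A:
  assumes "x \<in> HA A" "y \<in> HA A"
  shows "eventually (\<lambda>t. (\<lambda>k. cnj (ev (x k) t) * ev (y k) t) sums ev (inner_A A x y) t) F"
  using conv_to_sums[OF conv_to_inner_A[OF assms]] eventually_ev_inner_terms[of x y]
  by eventually_elim simp

lemma hnorm_nonneg: "0 \<le> hnorm A x"
  unfolding hnorm_def using c_norm_nonneg[of "inner_A A x x"] by simp

lemma power2_hnorm: "(hnorm A x)\<^sup>2 = c_norm A (inner_A A x x)"
  unfolding hnorm_def using c_norm_nonneg[of "inner_A A x x"] by simp

lemma eventually_ev_inner_A_self:
  assumes "x \<in> HA A"
  shows "eventually (\<lambda>t. summable (\<lambda>k. (cmod (ev (x k) t))\<^sup>2)
    \<and> ev (inner_A A x x) t = of_real (\<Sum>k. (cmod (ev (x k) t))\<^sup>2)) F"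
  using eventually_sums_inner_A[OF assms assms]
proof eventually_elim
  case (elim t)
  then have S: "(\<lambda>k. of_real ((cmod (ev (x k) t))\<^sup>2)) sums ev (inner_A A x x) t"
    by (simp only: cnj_mult_self)
  then have R: "(\<lambda>k. (cmod (ev (x k) t))\<^sup>2) sums Re (ev (inner_A A x x) t)"
    using sums_Re[OF S] by simp
  then have "ev (inner_A A x x) t = of_real (Re (ev (inner_A A x x) t))"
    using sums_unique2[OF S sums_of_real[OF R]] by simp
  with R show ?case by (simp add: sums_iff)
qed

lemma eventually_l2_le_hnorm:
  assumes "x \<in> HA A"
  shows "eventually (\<lambda>t. summable (\<lambda>k. (cmod (ev (x k) t))\<^sup>2) \<and> (\<Sum>k. (cmod (ev (x k) t))\<^sup>2) \<le> (hnorm A x)\<^sup>2) F"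
  using eventually_ev_inner_A_self[OF assms] eventually_norm_ev_le_c_norm[of "inner_A A x x"]
  by eventually_elim (auto simp: power2_hnorm)

lemma eventually_norm_ev_le_hnorm:
  assumes "x \<in> HA A"
  shows "eventually (\<lambda>t. \<forall>k. cmod (ev (x k) t) \<le> hnorm A x) F"
  using eventually_l2_le_hnorm[OF assms]
proof eventually_elim
  case (elim t)
  show ?case
  proof
    fix k
    have "(cmod (ev (x k) t))\<^sup>2 \<le> (\<Sum>k. (cmod (ev (x k) t))\<^sup>2)"
      using sum_le_suminf[of "\<lambda>k. (cmod (ev (x k) t))\<^sup>2" "{k}"] elim by simp
    also have "\<dots> \<le> (hnorm A x)\<^sup>2"
      using elim by simp
    finally show "cmod (ev (x k) t) \<le> hnorm A x"
      using hnorm_nonneg by (rule power2_le_imp_le)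
  qed
qed

lemma eventually_sum_l2_le_hnorm:
  assumes "x \<in> HA A"
  shows "eventually (\<lambda>t. \<forall>m. (\<Sum>k<m. (cmod (ev (x k) t))\<^sup>2) \<le> (hnorm A x)\<^sup>2) F"
  using eventually_l2_le_hnorm[OF assms]
proof eventually_elim
  case (elim t)
  show ?case
  proof
    fix m
    have "(\<Sum>k<m. (cmod (ev (x k) t))\<^sup>2) \<le> (\<Sum>k. (cmod (ev (x k) t))\<^sup>2)"
      using elim by (intro sum_le_suminf) auto
    with elim show "(\<Sum>k<m. (cmod (ev (x k) t))\<^sup>2) \<le> (hnorm A x)\<^sup>2" by linarith
  qed
qed

lemma power2_hnorm_le:
  assumes "x \<in> HA A" "0 \<le> B" "eventually (\<lambda>t. \<forall>m. (\<Sum>k<m. (cmod (ev (x k) t))\<^sup>2) \<le> B) F"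
  shows "(hnorm A x)\<^sup>2 \<le> B"
proof -
  from eventually_ev_inner_A_self[OF assms(1)] assms(3)
  have "eventually (\<lambda>t. cmod (ev (inner_A A x x) t) \<le> B) F"
  proof eventually_elim
    case (elim t)
    then have sm: "summable (\<lambda>k. (cmod (ev (x k) t))\<^sup>2)" by blast
    have "(\<Sum>k. (cmod (ev (x k) t))\<^sup>2) \<le> B"
      using suminf_le_const[OF sm] elim(2) by blast
    moreover have "0 \<le> (\<Sum>k. (cmod (ev (x k) t))\<^sup>2)"
      by (rule suminf_nonneg[OF sm]) simp
    ultimately show ?case using elim(1) by simp
  qed
  then show ?thesis
    unfolding power2_hnorm using c_norm_le_iff[OF assms(2)] by blast
qed

lemma eventually_ev_shift_minus:
  fixes x :: "nat \<Rightarrow> 'a"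
  shows "eventually (\<lambda>t. \<forall>k. ev (minus_scalar A (shift A) \<alpha> x k) t
    = shift_minus_seq (ev \<alpha> t) (\<lambda>k. ev (x k) t) k) F"
proof (rule eventually_all_nat)
  fix k
  from ev_add[of "shift A x k" "c_neg A (c_mul A \<alpha> (x k))"] ev_neg[of "c_mul A \<alpha> (x k)"]
    ev_mul[of \<alpha> "x k"] ev_zero
  show "eventually (\<lambda>t. ev (minus_scalar A (shift A) \<alpha> x k) t
      = shift_minus_seq (ev \<alpha> t) (\<lambda>k. ev (x k) t) k) F"
    by eventually_elim (simp add: minus_scalar_def shift_def shift_minus_seq_def)
qed

lemma A_point_spectrum_shift: "A_point_spectrum A (shift A) = {}"
proof -
  have "x = vzero A" if "minus_scalar A (shift A) \<alpha> x = vzero A" for \<alpha> x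
  proof -
    from eventually_ev_shift_minus[of \<alpha> x] ev_zero
    have "eventually (\<lambda>t. \<forall>k. ev (x k) t = ev (c_zero A) t) F"
    proof eventually_elim
      case (elim t)
      have "ev (minus_scalar A (shift A) \<alpha> x k) t = 0" for k
        using that elim(2) by (simp add: vzero_def)
      with elim(1) have "shift_minus_seq (ev \<alpha> t) (\<lambda>k. ev (x k) t) k = 0" for k
        by simp
      then have "ev (x k) t = 0" for k
        by (rule shift_minus_seq_zeroD)
      with elim(2) show ?case by simp
    qed
    then have "x k = c_zero A" for k
      by (intro ev_inject) (auto elim: eventually_mono)
    then show ?thesis by (auto simp: vzero_def)
  qed
  then show ?thesis unfolding A_point_spectrum_def by blast
qed

definition seq_op :: "(real \<Rightarrow> (nat \<Rightarrow> complex) \<Rightarrow> nat \<Rightarrow> complex) \<Rightarrow> (nat \<Rightarrow> 'a) \<Rightarrow> nat \<Rightarrow> 'a" where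
  "seq_op \<Phi> x k = elem_of (\<lambda>t. \<Phi> t (\<lambda>j. ev (x j) t) k)"

lemma eventually_ev_seq_op:
  assumes "\<And>k. representable (\<lambda>t. \<Phi> t (\<lambda>j. ev (x j) t) k)"
  shows "eventually (\<lambda>t. \<forall>k. ev (seq_op \<Phi> x k) t = \<Phi> t (\<lambda>j. ev (x j) t) k) F"
  unfolding seq_op_def by (intro eventually_all_nat ev_elem_of assms)

lemma eventually_ev_vadd: "eventually (\<lambda>t. \<forall>k. ev (vadd A x y k) t = ev (x k) t + ev (y k) t) F"
  unfolding vadd_def by (intro eventually_all_nat ev_add)

lemma eventually_ev_ract: "eventually (\<lambda>t. \<forall>k. ev (ract A x c k) t = ev (x k) t * ev c t) F"
  unfolding ract_def by (intro eventually_all_nat ev_mul)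

end

subsection \<open>Invertibility of \<open>S - \<alpha>\<close> when \<open>|\<alpha>|\<close> is bounded below by a constant \<open>> 1\<close>\<close>

locale shift_resolvent = function_calg +
  fixes \<alpha> \<beta> :: 'a and q :: real
  assumes q_nonneg: "0 \<le> q" and q_less_1: "q < 1"
    and eventually_inverse: "eventually (\<lambda>t. ev \<alpha> t * ev \<beta> t = 1 \<and> cmod (ev \<beta> t) \<le> q) F"
begin

definition res :: "(nat \<Rightarrow> 'a) \<Rightarrow> nat \<Rightarrow> 'a" where
  "res = seq_op (\<lambda>t. res_seq (ev \<beta> t))"

definition res_adj :: "(nat \<Rightarrow> 'a) \<Rightarrow> nat \<Rightarrow> 'a" where
  "res_adj = seq_op (\<lambda>t. res_adj_seq (ev \<beta> t))"

lemma representable_res_seq: "representable (\<lambda>t. res_seq (ev \<beta> t) (\<lambda>j. ev (x j) t) k)"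
proof (induction k)
  case 0
  show ?case by (simp, intro representable_minus representable_mult representable_ev)
next
  case (Suc k)
  then show ?case by (simp, intro representable_mult representable_diff representable_ev)
qed

lemma eventually_ev_res: "eventually (\<lambda>t. \<forall>k. ev (res x k) t = res_seq (ev \<beta> t) (\<lambda>j. ev (x j) t) k) F"
  unfolding res_def by (intro eventually_ev_seq_op representable_res_seq)

lemma shift_minus_res: "minus_scalar A (shift A) \<alpha> (res x) = x"
proof
  fix k
  from eventually_ev_shift_minus[of \<alpha> "res x"] eventually_ev_res[of x] eventually_inverse
  show "minus_scalar A (shift A) \<alpha> (res x) k = x k"
    by (intro ev_inject, eventually_elim) (simp add: shift_minus_res_seq)
qed

lemma res_shift_minus: "res (minus_scalar A (shift A) \<alpha> x) = x"
proof
  fix k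
  from eventually_ev_res[of "minus_scalar A (shift A) \<alpha> x"] eventually_ev_shift_minus[of \<alpha> x]
    eventually_inverse
  show "res (minus_scalar A (shift A) \<alpha> x) k = x k"
    by (intro ev_inject, eventually_elim) (simp add: res_seq_shift_minus)
qed

lemma res_vadd: "res (vadd A x y) = vadd A (res x) (res y)"
proof
  fix k
  from eventually_ev_res[of "vadd A x y"] eventually_ev_vadd[of x y] eventually_ev_res[of x]
    eventually_ev_res[of y] eventually_ev_vadd[of "res x" "res y"]
  show "res (vadd A x y) k = vadd A (res x) (res y) k"
    by (intro ev_inject, eventually_elim) (simp add: res_seq_add)
qed

lemma res_ract: "res (ract A x c) = ract A (res x) c"
proof
  fix k
  from eventually_ev_res[of "ract A x c"] eventually_ev_ract[of x c] eventually_ev_res[of x]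
    eventually_ev_ract[of "res x" c]
  show "res (ract A x c) k = ract A (res x) c k"
    by (intro ev_inject, eventually_elim) (simp add: res_seq_mult_right)
qed

lemma res_in_HA:
  assumes x: "x \<in> HA A"
  shows "res x \<in> HA A"
proof -
  have "uniform_tails (\<lambda>k t. (cmod (res_seq (ev \<beta> t) (\<lambda>j. ev (x j) t) k))\<^sup>2)"
    unfolding uniform_tails_def
  proof (intro allI impI)
    fix e :: real
    assume "e > 0"
    then obtain \<delta> i where "0 < \<delta>" and tail: "\<And>b X J n m. cmod b \<le> q
        \<Longrightarrow> (\<And>m. (\<Sum>k<m. (cmod (X k))\<^sup>2) \<le> (hnorm A x)\<^sup>2)
        \<Longrightarrow> (\<And>n m. n \<ge> J \<Longrightarrow> (\<Sum>k<m. (cmod (X (n + k)))\<^sup>2) \<le> \<delta>) \<Longrightarrow> J + i \<le> n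
        \<Longrightarrow> (\<Sum>k<m. (cmod (res_seq b X (n + k)))\<^sup>2) \<le> e"
      using res_seq_uniform_tail[OF q_nonneg q_less_1, where H = "(hnorm A x)\<^sup>2"] by blast
    then obtain J where "eventually (\<lambda>t. \<forall>n\<ge>J. \<forall>m. (\<Sum>k<m. (cmod (ev (x (n + k)) t))\<^sup>2) \<le> \<delta>) F"
      using x unfolding HA_iff_uniform_tails uniform_tails_def by blast
    with eventually_inverse eventually_sum_l2_le_hnorm[OF x]
    have "eventually (\<lambda>t. \<forall>n\<ge>J + i. \<forall>m.
        (\<Sum>k<m. (cmod (res_seq (ev \<beta> t) (\<lambda>j. ev (x j) t) (n + k)))\<^sup>2) \<le> e) F"
      by eventually_elim (blast intro: tail)
    then show "\<exists>N. eventually (\<lambda>t. \<forall>n\<ge>N. \<forall>m.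
        (\<Sum>k<m. (cmod (res_seq (ev \<beta> t) (\<lambda>j. ev (x j) t) (n + k)))\<^sup>2) \<le> e) F" ..
  qed
  then have "uniform_tails (\<lambda>k t. (cmod (ev (res x k) t))\<^sup>2)"
    by (rule uniform_tails_cong[rotated]) (use eventually_ev_res[of x] in \<open>auto elim: eventually_mono\<close>)
  then show ?thesis
    unfolding HA_iff_uniform_tails .
qed

lemma hnorm_res_le:
  assumes x: "x \<in> HA A"
  shows "hnorm A (res x) \<le> q / (1 - q) * hnorm A x"
proof -
  have q1: "0 < 1 - q" using q_less_1 by simp
  have "(hnorm A (res x))\<^sup>2 \<le> (q / (1 - q) * hnorm A x)\<^sup>2"
  proof (rule power2_hnorm_le[OF res_in_HA[OF x]])
    from eventually_inverse eventually_sum_l2_le_hnorm[OF x] eventually_ev_res[of x]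
    show "eventually (\<lambda>t. \<forall>m. (\<Sum>k<m. (cmod (ev (res x k) t))\<^sup>2) \<le> (q / (1 - q) * hnorm A x)\<^sup>2) F"
    proof eventually_elim
      case (elim t)
      show ?case
      proof
        fix m
        have "(1 - q) * (\<Sum>k<m. (cmod (res_seq (ev \<beta> t) (\<lambda>j. ev (x j) t) k))\<^sup>2)
            \<le> q\<^sup>2 / (1 - q) * (\<Sum>k<m. (cmod (ev (x k) t))\<^sup>2)"
          using elim(1) by (intro res_seq_l2_le[OF q_nonneg q_less_1]) blast
        also have "\<dots> \<le> q\<^sup>2 / (1 - q) * (hnorm A x)\<^sup>2"
          using elim(2) q1 by (intro mult_left_mono) auto
        finally have "(\<Sum>k<m. (cmod (res_seq (ev \<beta> t) (\<lambda>j. ev (x j) t) k))\<^sup>2)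
            \<le> q\<^sup>2 / (1 - q) * (hnorm A x)\<^sup>2 / (1 - q)"
          using q1 by (intro mult_imp_le_div_pos) (simp_all add: mult.commute)
        also have "\<dots> = (q / (1 - q) * hnorm A x)\<^sup>2"
          by (simp add: power2_eq_square)
        finally show "(\<Sum>k<m. (cmod (ev (res x k) t))\<^sup>2) \<le> (q / (1 - q) * hnorm A x)\<^sup>2"
          using elim(3) by simp
      qed
    qed
  qed simp
  then show ?thesis
    by (rule power2_le_imp_le) (use q_nonneg q1 hnorm_nonneg[of x] in simp)
qed

lemma representable_res_adj_seq:
  assumes v: "v \<in> HA A"
  shows "representable (\<lambda>t. res_adj_seq (ev \<beta> t) (\<lambda>j. ev (v j) t) k)"
proof (rule representable_uniform_limit)
  fix n
  show "representable (\<lambda>t. - (\<Sum>i<n. cnj (ev \<beta> t) ^ Suc i * ev (v (k + i)) t))"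
    by (intro representable_minus representable_sum representable_mult representable_power
        representable_cnj representable_ev)
next
  fix e :: real
  assume "e > 0"
  then obtain N where N: "q ^ N * (hnorm A v / (1 - q)) \<le> e"
    using exists_power_mult_le[OF q_nonneg q_less_1] by blast
  have "eventually (\<lambda>t. cmod (- (\<Sum>i<n. cnj (ev \<beta> t) ^ Suc i * ev (v (k + i)) t)
      - res_adj_seq (ev \<beta> t) (\<lambda>j. ev (v j) t) k) \<le> e) F" if "n \<ge> N" for n
    using eventually_inverse eventually_norm_ev_le_hnorm[OF v]
  proof eventually_elim
    case (elim t)
    let ?b = "ev \<beta> t" and ?V = "\<lambda>j. ev (v j) t"
    have bq: "cmod ?b \<le> q" and B: "\<And>j. cmod (?V j) \<le> hnorm A v"
      using elim by auto
    have "cmod (- (\<Sum>i<n. cnj ?b ^ Suc i * ?V (k + i)) - res_adj_seq ?b ?V k)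
        = cmod ?b ^ n * cmod (res_adj_seq ?b ?V (k + n))"
      by (subst res_adj_seq_minus_partial_sum[OF q_nonneg q_less_1 bq B]) (simp add: norm_mult norm_power)
    also have "\<dots> \<le> q ^ n * (hnorm A v / (1 - q))"
      using bq B q_nonneg by (intro mult_mono power_mono norm_res_adj_seq_le[OF q_nonneg q_less_1 bq]) auto
    also have "\<dots> \<le> q ^ N * (hnorm A v / (1 - q))"
      using q_nonneg q_less_1 hnorm_nonneg[of v] that
      by (intro mult_right_mono power_decreasing) auto
    finally show ?case using N by linarith
  qed
  then show "\<exists>N. \<forall>n\<ge>N. eventually (\<lambda>t. cmod (- (\<Sum>i<n. cnj (ev \<beta> t) ^ Suc i * ev (v (k + i)) t)
      - res_adj_seq (ev \<beta> t) (\<lambda>j. ev (v j) t) k) \<le> e) F" by blast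
qed

lemma eventually_ev_res_adj:
  assumes "v \<in> HA A"
  shows "eventually (\<lambda>t. \<forall>k. ev (res_adj v k) t = res_adj_seq (ev \<beta> t) (\<lambda>j. ev (v j) t) k) F"
  unfolding res_adj_def by (intro eventually_ev_seq_op representable_res_adj_seq assms)

lemma res_adj_in_HA:
  assumes v: "v \<in> HA A"
  shows "res_adj v \<in> HA A"
proof -
  have "uniform_tails (\<lambda>k t. (cmod (res_adj_seq (ev \<beta> t) (\<lambda>j. ev (v j) t) k))\<^sup>2)"
    unfolding uniform_tails_def
  proof (intro allI impI)
    fix e :: real
    assume "e > 0"
    then obtain \<delta> where "0 < \<delta>" and tail: "\<And>b V B j m. cmod b \<le> q \<Longrightarrow> (\<And>k. cmod (V k) \<le> B)
        \<Longrightarrow> V \<longlonglongrightarrow> 0 \<Longrightarrow> (\<And>m. (\<Sum>k<m. (cmod (V (j + k)))\<^sup>2) \<le> \<delta>)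
        \<Longrightarrow> (\<Sum>k<m. (cmod (res_adj_seq b V (j + k)))\<^sup>2) \<le> e"
      using res_adj_seq_uniform_tail[OF q_nonneg q_less_1] by blast
    then obtain N where "eventually (\<lambda>t. \<forall>n\<ge>N. \<forall>m. (\<Sum>k<m. (cmod (ev (v (n + k)) t))\<^sup>2) \<le> \<delta>) F"
      using v unfolding HA_iff_uniform_tails uniform_tails_def by blast
    with eventually_inverse eventually_norm_ev_le_hnorm[OF v] eventually_l2_le_hnorm[OF v]
    have "eventually (\<lambda>t. \<forall>n\<ge>N. \<forall>m.
        (\<Sum>k<m. (cmod (res_adj_seq (ev \<beta> t) (\<lambda>j. ev (v j) t) (n + k)))\<^sup>2) \<le> e) F"
    proof eventually_elim
      case (elim t)
      then have "(\<lambda>j. ev (v j) t) \<longlonglongrightarrow> 0"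
        by (intro l2_tendsto_zero) blast
      with elim show ?case
        by (blast intro: tail)
    qed
    then show "\<exists>N. eventually (\<lambda>t. \<forall>n\<ge>N. \<forall>m.
        (\<Sum>k<m. (cmod (res_adj_seq (ev \<beta> t) (\<lambda>j. ev (v j) t) (n + k)))\<^sup>2) \<le> e) F" ..
  qed
  then have "uniform_tails (\<lambda>k t. (cmod (ev (res_adj v k) t))\<^sup>2)"
    by (rule uniform_tails_cong[rotated]) (use eventually_ev_res_adj[OF v] in \<open>auto elim: eventually_mono\<close>)
  then show ?thesis
    unfolding HA_iff_uniform_tails .
qed

lemma inner_A_res:
  assumes x: "x \<in> HA A" and v: "v \<in> HA A"
  shows "inner_A A (res x) v = inner_A A x (res_adj v)"
proof (rule ev_inject)
  from eventually_sums_inner_A[OF res_in_HA[OF x] v] eventually_sums_inner_A[OF x res_adj_in_HA[OF v]]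
    eventually_ev_res[of x] eventually_ev_res_adj[OF v] eventually_inverse
    eventually_l2_le_hnorm[OF x] eventually_l2_le_hnorm[OF v]
  show "eventually (\<lambda>t. ev (inner_A A (res x) v) t = ev (inner_A A x (res_adj v)) t) F"
  proof eventually_elim
    case (elim t)
    have bq: "cmod (ev \<beta> t) \<le> q" using elim(5) by blast
    have "(\<Sum>k. cnj (res_seq (ev \<beta> t) (\<lambda>j. ev (x j) t) k) * ev (v k) t)
        = (\<Sum>k. cnj (ev (x k) t) * res_adj_seq (ev \<beta> t) (\<lambda>j. ev (v j) t) k)"
      using elim(5-7) by (intro res_seq_adjoint[OF q_nonneg q_less_1 bq, of "ev \<alpha> t"]) auto
    with elim(1-4) show ?case by (simp add: sums_iff)
  qed
qed

lemma res_in_Ba: "res \<in> Ba A"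
  unfolding Ba_def
proof (intro CollectI conjI ballI allI)
  show "res x \<in> HA A" if "x \<in> HA A" for x
    using that by (rule res_in_HA)
  show "res (vadd A x y) = vadd A (res x) (res y)" for x y
    by (rule res_vadd)
  show "res (ract A x c) = ract A (res x) c" for x c
    by (rule res_ract)
  show "\<exists>C. \<forall>x\<in>HA A. hnorm A (res x) \<le> C * hnorm A x"
    using hnorm_res_le by blast
  show "\<exists>G. (\<forall>y\<in>HA A. G y \<in> HA A) \<and> (\<forall>x\<in>HA A. \<forall>y\<in>HA A. inner_A A (res x) y = inner_A A x (G y))"
    using res_adj_in_HA inner_A_res by blast
qed

lemma not_in_A_spectrum_shift: "\<alpha> \<notin> A_spectrum A (shift A)"
  unfolding A_spectrum_def invertible_Ba_def using res_in_Ba res_shift_minus shift_minus_res by blast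

end

subsection \<open>Approximate eigenvectors when \<open>inf |\<alpha>| \<le> 1\<close>\<close>

lemma sum_cnj_mult_self_telescope:
  fixes Z U :: "nat \<Rightarrow> complex"
  assumes ZU: "\<And>k. k \<le> n \<Longrightarrow> Z k = shift_minus_seq a U k"
    and ZS: "\<And>k. Z (Suc k) = cnj a * Z k"
  shows "(\<Sum>k\<le>n. cnj (Z k) * Z k) = - a * cnj (Z n) * U n"
  using ZU
proof (induction n)
  case 0
  then show ?case by (simp add: shift_minus_seq_def algebra_simps)
next
  case (Suc n)
  have IH: "(\<Sum>k\<le>n. cnj (Z k) * Z k) = - a * cnj (Z n) * U n"
    by (rule Suc.IH) (simp add: Suc.prems)
  have Z: "Z (Suc n) = U n - a * U (Suc n)"
    using Suc.prems[of "Suc n"] by (simp add: shift_minus_seq_def)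
  have cZ: "cnj (Z (Suc n)) = a * cnj (Z n)"
    by (simp add: ZS)
  have "(\<Sum>k\<le>Suc n. cnj (Z k) * Z k) = - a * cnj (Z n) * U n + a * cnj (Z n) * (U n - a * U (Suc n))"
    unfolding sum.atMost_Suc IH cZ by (simp only: Z)
  also have "\<dots> = - a * cnj (Z (Suc n)) * U (Suc n)"
    by (simp add: cZ algebra_simps)
  finally show ?case .
qed

lemma power_le_geometric_sum:
  fixes s \<eta> :: real
  assumes "0 \<le> s" "s \<le> 1 + \<eta>" "0 \<le> \<eta>" "N \<ge> 1"
  shows "s ^ N \<le> (\<eta> + 1 / N) * (\<Sum>k<N. s ^ k)"
proof (cases "s \<ge> 1")
  case True
  have "real N \<le> (\<Sum>k<N. s ^ k)"
    using sum_mono[of "{..<N}" "\<lambda>_. 1" "\<lambda>k. s ^ k"] True by (simp add: one_le_power)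
  then have "1 \<le> 1 / N * (\<Sum>k<N. s ^ k)"
    using assms(4) by (simp add: field_simps)
  moreover have "(s - 1) * (\<Sum>k<N. s ^ k) \<le> \<eta> * (\<Sum>k<N. s ^ k)"
    using assms by (intro mult_right_mono sum_nonneg) auto
  moreover have "s ^ N = 1 + (s - 1) * (\<Sum>k<N. s ^ k)"
    using one_diff_power_eq[of s N] by (simp add: algebra_simps)
  ultimately show ?thesis by (simp add: distrib_right)
next
  case False
  have "real N * s ^ N \<le> (\<Sum>k<N. s ^ k)"
    using sum_mono[of "{..<N}" "\<lambda>_. s ^ N" "\<lambda>k. s ^ k"] False assms(1)
    by (simp add: power_decreasing)
  then have "s ^ N \<le> 1 / N * (\<Sum>k<N. s ^ k)"
    using assms(4) by (simp add: field_simps)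
  also have "\<dots> \<le> (\<eta> + 1 / N) * (\<Sum>k<N. s ^ k)"
    using assms by (intro mult_right_mono sum_nonneg) auto
  finally show ?thesis .
qed

lemma power2_mult_le_cancel:
  fixes f y B S d :: real
  assumes "0 \<le> S" "0 \<le> d" and P: "f\<^sup>2 * S \<le> f * y * B" and G: "y\<^sup>2 \<le> d * S"
  shows "f\<^sup>2 * S \<le> d * B\<^sup>2"
proof (cases "f\<^sup>2 * S = 0")
  case False
  then have pos: "0 < f\<^sup>2 * S" using assms(1) by (simp add: less_le)
  have "(f\<^sup>2 * S) * (f\<^sup>2 * S) \<le> (f * y * B)\<^sup>2"
    using P pos by (simp add: power2_eq_square mult_mono)
  also have "\<dots> = f\<^sup>2 * y\<^sup>2 * B\<^sup>2"
    by (simp add: power_mult_distrib)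
  also have "\<dots> \<le> f\<^sup>2 * (d * S) * B\<^sup>2"
    using G by (intro mult_right_mono mult_left_mono) simp_all
  also have "\<dots> = (f\<^sup>2 * S) * (d * B\<^sup>2)"
    by (simp add: mult_ac)
  finally show ?thesis
    using pos by (simp add: mult_le_cancel_left_pos)
qed (use assms(2) in auto)

text \<open>Let \<open>z\<^sub>k = w (cnj a)\<^sup>k\<close> for \<open>k < N\<close>, a truncated eigenvector of \<open>S\<^sup>*\<close>, and \<open>(S - a) U = z\<close> there.
  Telescoping gives \<open>\<parallel>z\<parallel>\<^sup>2 = |a| |z\<^sub>N\<^sub>-\<^sub>1| |U\<^sub>N\<^sub>-\<^sub>1|\<close>, and when \<open>|a|\<^sup>2 \<le> 1 + \<eta>\<close> the last coordinate carries
  at most the fraction \<open>\<eta> + 1/N\<close> of \<open>\<parallel>z\<parallel>\<^sup>2\<close>.\<close>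

lemma truncated_eigenvector_bound:
  fixes a w :: complex and U :: "nat \<Rightarrow> complex"
  assumes N: "N \<ge> 1" and \<eta>: "0 \<le> \<eta>"
    and ZU: "\<And>k. k < N \<Longrightarrow> w * cnj a ^ k = shift_minus_seq a U k"
    and U: "\<And>k. cmod (U k) \<le> B"
    and a: "w \<noteq> 0 \<Longrightarrow> (cmod a)\<^sup>2 \<le> 1 + \<eta>"
  shows "(\<Sum>k<N. (cmod (w * cnj a ^ k))\<^sup>2) \<le> (\<eta> + 1 / N) * B\<^sup>2"
proof (cases "w = 0")
  case True
  then show ?thesis using \<eta> by simp
next
  case False
  define f where "f = cmod w"
  define r where "r = cmod a"
  define S where "S = (\<Sum>k<N. (r\<^sup>2) ^ k)"
  define d where "d = \<eta> + 1 / N"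
  have f: "0 \<le> f" and r: "0 \<le> r" and S: "0 \<le> S" and d: "0 \<le> d"
    using \<eta> by (auto simp: f_def r_def S_def d_def intro: sum_nonneg)
  have norms: "(cmod (w * cnj a ^ k))\<^sup>2 = f\<^sup>2 * (r\<^sup>2) ^ k" for k
    by (simp add: f_def r_def norm_mult norm_power power_mult_distrib flip: power_mult)
      (simp add: mult.commute)
  then have lhs: "(\<Sum>k<N. (cmod (w * cnj a ^ k))\<^sup>2) = f\<^sup>2 * S"
    by (simp add: S_def sum_distrib_left)
  have "{..N - 1} = {..<N}"
    using N by auto
  then have "complex_of_real (f\<^sup>2 * S) = (\<Sum>k\<le>N - 1. cnj (w * cnj a ^ k) * (w * cnj a ^ k))"
    by (simp only: lhs[symmetric] of_real_sum cnj_mult_self)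
  also have "\<dots> = - a * cnj (w * cnj a ^ (N - 1)) * U (N - 1)"
    by (rule sum_cnj_mult_self_telescope) (use ZU N in auto)
  finally have eq: "complex_of_real (f\<^sup>2 * S) = - a * cnj (w * cnj a ^ (N - 1)) * U (N - 1)" .
  have "f\<^sup>2 * S = cmod (complex_of_real (f\<^sup>2 * S))"
    using f S by (simp only: norm_of_real abs_of_nonneg zero_le_power2 mult_nonneg_nonneg)
  also have "\<dots> = r * (f * r ^ (N - 1)) * cmod (U (N - 1))"
    unfolding eq by (simp add: f_def r_def norm_mult norm_power)
  also have "\<dots> = f * r ^ N * cmod (U (N - 1))"
    using N by (cases N) (simp_all add: mult_ac)
  also have "\<dots> \<le> f * r ^ N * B"
    using f r U by (intro mult_left_mono) auto
  finally have P: "f\<^sup>2 * S \<le> f * r ^ N * B" .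
  have "(r ^ N)\<^sup>2 = (r\<^sup>2) ^ N"
    by (simp flip: power_mult add: mult.commute)
  also have "\<dots> \<le> d * S"
    unfolding d_def S_def using a[OF False] \<eta> N r by (intro power_le_geometric_sum) (simp_all add: r_def)
  finally have G: "(r ^ N)\<^sup>2 \<le> d * S" .
  from S d P G have "f\<^sup>2 * S \<le> d * B\<^sup>2"
    by (rule power2_mult_le_cancel)
  then show ?thesis
    unfolding lhs d_def .
qed

context function_calg
begin

definition trunc_eigvec :: "'a \<Rightarrow> 'a \<Rightarrow> nat \<Rightarrow> nat \<Rightarrow> 'a" where
  "trunc_eigvec \<phi> \<alpha> N k = elem_of (\<lambda>t. if k < N then ev \<phi> t * cnj (ev \<alpha> t) ^ k else 0)"

lemma eventually_ev_trunc_eigvec: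
  "eventually (\<lambda>t. \<forall>k. ev (trunc_eigvec \<phi> \<alpha> N k) t = (if k < N then ev \<phi> t * cnj (ev \<alpha> t) ^ k else 0)) F"
proof -
  have "representable (\<lambda>t. if k < N then ev \<phi> t * cnj (ev \<alpha> t) ^ k else 0)" for k
  proof (cases "k < N")
    case True
    then show ?thesis
      by (simp, intro representable_mult representable_power representable_cnj representable_ev)
  qed (simp add: representable_0)
  then show ?thesis
    unfolding trunc_eigvec_def by (intro eventually_all_nat ev_elem_of)
qed

lemma trunc_eigvec_in_HA: "trunc_eigvec \<phi> \<alpha> N \<in> HA A"
  unfolding HA_iff_uniform_tails uniform_tails_def
proof (intro allI impI exI)
  fix e :: real
  assume "e > 0"
  from eventually_ev_trunc_eigvec[of \<phi> \<alpha> N]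
  show "eventually (\<lambda>t. \<forall>n\<ge>N. \<forall>m. (\<Sum>k<m. (cmod (ev (trunc_eigvec \<phi> \<alpha> N (n + k)) t))\<^sup>2) \<le> e) F"
    by eventually_elim (simp add: \<open>e > 0\<close> less_imp_le)
qed

lemma hnorm_trunc_eigvec_le:
  assumes N: "N \<ge> 1" and \<eta>: "0 \<le> \<eta>"
    and supp: "eventually (\<lambda>t. ev \<phi> t \<noteq> 0 \<longrightarrow> (cmod (ev \<alpha> t))\<^sup>2 \<le> 1 + \<eta>) F"
    and u: "u \<in> HA A" "minus_scalar A (shift A) \<alpha> u = trunc_eigvec \<phi> \<alpha> N"
  shows "(hnorm A (trunc_eigvec \<phi> \<alpha> N))\<^sup>2 \<le> (\<eta> + 1 / N) * (hnorm A u)\<^sup>2"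
proof (rule power2_hnorm_le[OF trunc_eigvec_in_HA])
  show "0 \<le> (\<eta> + 1 / N) * (hnorm A u)\<^sup>2"
    using \<eta> by simp
  from eventually_ev_trunc_eigvec[of \<phi> \<alpha> N] eventually_ev_shift_minus[of \<alpha> u]
    eventually_norm_ev_le_hnorm[OF u(1)] supp
  show "eventually (\<lambda>t. \<forall>m. (\<Sum>k<m. (cmod (ev (trunc_eigvec \<phi> \<alpha> N k) t))\<^sup>2)
      \<le> (\<eta> + 1 / N) * (hnorm A u)\<^sup>2) F"
  proof eventually_elim
    case (elim t)
    let ?w = "ev \<phi> t" and ?a = "ev \<alpha> t"
    have bound: "(\<Sum>k<N. (cmod (?w * cnj ?a ^ k))\<^sup>2) \<le> (\<eta> + 1 / N) * (hnorm A u)\<^sup>2"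
    proof (rule truncated_eigenvector_bound[OF N \<eta>])
      show "?w * cnj ?a ^ k = shift_minus_seq ?a (\<lambda>j. ev (u j) t) k" if "k < N" for k
        using elim(1,2) u(2) that by metis
    qed (use elim in auto)
    show ?case
    proof
      fix m
      have "(\<Sum>k<m. (cmod (ev (trunc_eigvec \<phi> \<alpha> N k) t))\<^sup>2)
          = (\<Sum>k<m. if k < N then (cmod (?w * cnj ?a ^ k))\<^sup>2 else 0)"
        using elim(1) by (intro sum.cong) auto
      also have "\<dots> = (\<Sum>k\<in>{..<m} \<inter> {..<N}. (cmod (?w * cnj ?a ^ k))\<^sup>2)"
        by (simp add: sum.inter_restrict)
      also have "\<dots> \<le> (\<Sum>k<N. (cmod (?w * cnj ?a ^ k))\<^sup>2)"
        by (intro sum_mono2) auto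
      finally show "(\<Sum>k<m. (cmod (ev (trunc_eigvec \<phi> \<alpha> N k) t))\<^sup>2) \<le> (\<eta> + 1 / N) * (hnorm A u)\<^sup>2"
        using bound by linarith
    qed
  qed
qed

text \<open>If \<open>S - \<alpha>\<close> had an inverse of norm \<open>C\<close>, the truncated eigenvectors of \<open>S\<^sup>*\<close> with \<open>N \<ge> 4 C\<^sup>2\<close>
  coordinates, supported where \<open>|\<alpha>|\<^sup>2 \<le> 1 + 1 / (4 C\<^sup>2)\<close>, would satisfy \<open>\<parallel>z\<parallel>\<^sup>2 \<le> \<parallel>z\<parallel>\<^sup>2 / 2\<close>.\<close>

lemma in_A_spectrum_shift:
  assumes approx: "\<And>c. c > 1 \<Longrightarrow> \<exists>\<phi>. \<not> eventually (\<lambda>t. ev \<phi> t = 0) F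
                     \<and> eventually (\<lambda>t. ev \<phi> t \<noteq> 0 \<longrightarrow> cmod (ev \<alpha> t) \<le> c) F"
  shows "\<alpha> \<in> A_spectrum A (shift A)"
proof (rule ccontr)
  assume "\<alpha> \<notin> A_spectrum A (shift A)"
  then obtain G where "G \<in> Ba A"
    and inv: "\<And>x. x \<in> HA A \<Longrightarrow> minus_scalar A (shift A) \<alpha> (G x) = x"
    unfolding A_spectrum_def invertible_Ba_def by blast
  then obtain C0 where G_HA: "\<And>x. x \<in> HA A \<Longrightarrow> G x \<in> HA A"
    and C0: "\<And>x. x \<in> HA A \<Longrightarrow> hnorm A (G x) \<le> C0 * hnorm A x"
    unfolding Ba_def by blast
  define C where "C = max C0 1"
  have C1: "1 \<le> C"
    by (simp add: C_def)
  have C: "hnorm A (G x) \<le> C * hnorm A x" if "x \<in> HA A" for x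
  proof -
    have "C0 * hnorm A x \<le> C * hnorm A x"
      unfolding C_def by (intro mult_right_mono hnorm_nonneg) simp
    with C0[OF that] show ?thesis by linarith
  qed
  define N :: nat where "N = nat \<lceil>4 * C\<^sup>2\<rceil> + 1"
  define \<eta> where "\<eta> = 1 / (4 * C\<^sup>2)"
  have N: "N \<ge> 1" and \<eta>: "0 \<le> \<eta>"
    by (simp_all add: N_def \<eta>_def)
  have small: "(\<eta> + 1 / N) * C\<^sup>2 \<le> 1 / 2"
  proof -
    have "4 * C\<^sup>2 \<le> N" unfolding N_def by linarith
    then have "1 / N \<le> \<eta>"
      using C1 N unfolding \<eta>_def by (intro divide_left_mono) auto
    then have "(\<eta> + 1 / N) * C\<^sup>2 \<le> 2 * \<eta> * C\<^sup>2"
      using C1 by (intro mult_right_mono) auto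
    also have "\<dots> = 1 / 2"
      using C1 by (simp add: \<eta>_def)
    finally show ?thesis .
  qed
  obtain \<phi> where \<phi>: "\<not> eventually (\<lambda>t. ev \<phi> t = 0) F"
    and supp: "eventually (\<lambda>t. ev \<phi> t \<noteq> 0 \<longrightarrow> cmod (ev \<alpha> t) \<le> sqrt (1 + \<eta>)) F"
    using approx[of "sqrt (1 + \<eta>)"] C1 by (auto simp: \<eta>_def)
  have supp': "eventually (\<lambda>t. ev \<phi> t \<noteq> 0 \<longrightarrow> (cmod (ev \<alpha> t))\<^sup>2 \<le> 1 + \<eta>) F"
    using supp
  proof eventually_elim
    case (elim t)
    then have "ev \<phi> t \<noteq> 0 \<longrightarrow> (cmod (ev \<alpha> t))\<^sup>2 \<le> (sqrt (1 + \<eta>))\<^sup>2"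
      by (auto intro: power_mono)
    with \<eta> show ?case by simp
  qed
  define z where "z = trunc_eigvec \<phi> \<alpha> N"
  have z: "z \<in> HA A"
    unfolding z_def by (rule trunc_eigvec_in_HA)
  have "(hnorm A z)\<^sup>2 \<le> (\<eta> + 1 / N) * (hnorm A (G z))\<^sup>2"
    unfolding z_def by (rule hnorm_trunc_eigvec_le[OF N \<eta> supp' G_HA inv]) (simp_all add: z[unfolded z_def])
  also have "\<dots> \<le> (\<eta> + 1 / N) * (C * hnorm A z)\<^sup>2"
    using C[OF z] \<eta> hnorm_nonneg[of "G z"] by (intro mult_left_mono power_mono) auto
  also have "\<dots> = ((\<eta> + 1 / N) * C\<^sup>2) * (hnorm A z)\<^sup>2"
    by (simp add: power_mult_distrib)
  also have "\<dots> \<le> 1 / 2 * (hnorm A z)\<^sup>2"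
    using small by (rule mult_right_mono) simp
  finally have "hnorm A z = 0" by simp
  from eventually_norm_ev_le_hnorm[OF z] eventually_ev_trunc_eigvec[of \<phi> \<alpha> N]
  have "eventually (\<lambda>t. ev \<phi> t = 0) F"
    by eventually_elim (use N \<open>hnorm A z = 0\<close> in \<open>auto simp: z_def dest: spec[of _ 0]\<close>)
  with \<phi> show False ..
qed

lemma not_in_A_spectrum_shift_if_bounded_below:
  assumes K: "K > 1" and bounded_below: "eventually (\<lambda>t. K \<le> cmod (ev \<alpha> t)) F"
    and inverse: "representable (\<lambda>t. inverse (ev \<alpha> t))"
  shows "\<alpha> \<notin> A_spectrum A (shift A)"
proof -
  let ?\<beta> = "elem_of (\<lambda>t. inverse (ev \<alpha> t))"
  from bounded_below ev_elem_of[OF inverse]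
  have "eventually (\<lambda>t. ev \<alpha> t * ev ?\<beta> t = 1 \<and> cmod (ev ?\<beta> t) \<le> 1 / K) F"
  proof eventually_elim
    case (elim t)
    then have "0 < K" "ev \<alpha> t \<noteq> 0" using K by auto
    moreover have "inverse (cmod (ev \<alpha> t)) \<le> inverse K"
      using elim(1) \<open>0 < K\<close> by (rule le_imp_inverse_le)
    ultimately show ?case
      using elim(2) by (simp add: norm_inverse divide_inverse)
  qed
  then have "shift_resolvent A F ev \<alpha> ?\<beta> (1 / K)"
    using K by (intro shift_resolvent.intro function_calg_axioms shift_resolvent_axioms.intro) auto
  then show ?thesis
    by (rule shift_resolvent.not_in_A_spectrum_shift)
qed

end

section \<open>The instance \<open>C([0,1])\<close>\<close>

lemma Rep_C01_Abs_C01: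
  "continuous_on {0..1} f \<Longrightarrow> (\<And>t. t \<notin> {0..1} \<Longrightarrow> f t = 0) \<Longrightarrow> Rep_C01 (Abs_C01 f) = f"
  by (rule Abs_C01_inverse) auto

lemma continuous_on_Rep_C01: "continuous_on {0..1} (Rep_C01 a)"
  using Rep_C01[of a] by auto

lemma Rep_C01_outside: "t \<notin> {0..1} \<Longrightarrow> Rep_C01 a t = 0"
  using Rep_C01[of a] by auto

lemma Rep_C01_Abs_C01_pointwise:
  assumes "continuous_on {0..1} f" "\<And>t. t \<notin> {0..1} \<Longrightarrow> f t = 0"
  shows "\<forall>t\<in>{0..1}. Rep_C01 (Abs_C01 f) t = f t"
  using Rep_C01_Abs_C01[OF assms] by simp

lemma bdd_above_norm_Rep_C01: "bdd_above ((\<lambda>t. cmod (Rep_C01 a t)) ` {0..1})"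
  by (intro bounded_imp_bdd_above compact_imp_bounded compact_continuous_image continuous_intros
      continuous_on_Rep_C01) simp

lemma bounded_Rep_C01: "\<exists>C. \<forall>t\<in>{0..1}. cmod (Rep_C01 a t) \<le> C"
  using bdd_above_norm_Rep_C01[of a] by (auto simp: bdd_above_def)

lemma c_norm_C01: "c_norm C01_alg a = Inf {C. 0 \<le> C \<and> (\<forall>t\<in>{0..1}. cmod (Rep_C01 a t) \<le> C)}"
proof -
  let ?g = "\<lambda>t. cmod (Rep_C01 a t)" and ?S = "{C. 0 \<le> C \<and> (\<forall>t\<in>{0..1}. cmod (Rep_C01 a t) \<le> C)}"
  have ub: "?g t \<le> Sup (?g ` {0..1})" if "t \<in> {0..1}" for t
    using that by (intro cSup_upper bdd_above_norm_Rep_C01) simp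
  have "0 \<le> Sup (?g ` {0..1})"
    using order_trans[OF norm_ge_zero ub[of 0]] by simp
  with ub have "Sup (?g ` {0..1}) \<in> ?S"
    by blast
  moreover have "Sup (?g ` {0..1}) \<le> C" if "C \<in> ?S" for C
    using that by (intro cSup_least) auto
  ultimately have "Inf ?S = Sup (?g ` {0..1})"
    by (intro cInf_eq_minimum)
  then show ?thesis
    unfolding C01_alg_def by simp
qed

lemma C01_complete:
  fixes a :: "nat \<Rightarrow> C01"
  assumes "\<And>e. 0 < e \<Longrightarrow> \<exists>N. \<forall>n\<ge>N. \<forall>t\<in>{0..1}. cmod (Rep_C01 (a n) t - g t) \<le> e"
  shows "\<exists>s. \<forall>t\<in>{0..1}. Rep_C01 s t = g t"
proof -
  have "uniform_limit {0..1} (\<lambda>n. Rep_C01 (a n)) g sequentially"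
  proof (rule uniform_limitI)
    fix e :: real
    assume "e > 0"
    then obtain N where "\<forall>n\<ge>N. \<forall>t\<in>{0..1}. cmod (Rep_C01 (a n) t - g t) \<le> e / 2"
      using assms[of "e / 2"] by auto
    with \<open>e > 0\<close> show "\<forall>\<^sub>F n in sequentially. \<forall>t\<in>{0..1}. dist (Rep_C01 (a n) t) (g t) < e"
      unfolding eventually_sequentially dist_norm by fastforce
  qed
  then have "continuous_on {0..1} g"
    by (rule uniform_limit_theorem[rotated]) (simp_all add: continuous_on_Rep_C01)
  then have "continuous_on {0..1} (\<lambda>t. if t \<in> {0..1} then g t else 0)"
    by (rule continuous_on_cong[THEN iffD1, rotated 2]) auto
  then have "\<forall>t\<in>{0..1}. Rep_C01 (Abs_C01 (\<lambda>t. if t \<in> {0..1} then g t else 0)) t = g t"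
    using Rep_C01_Abs_C01_pointwise by fastforce
  then show ?thesis ..
qed

lemma Rep_C01_add: "Rep_C01 (c_add C01_alg a b) = (\<lambda>t. Rep_C01 a t + Rep_C01 b t)"
  unfolding C01_alg_def
  by (simp, rule Rep_C01_Abs_C01) (simp_all add: continuous_on_add continuous_on_Rep_C01 Rep_C01_outside)

lemma Rep_C01_mul: "Rep_C01 (c_mul C01_alg a b) = (\<lambda>t. Rep_C01 a t * Rep_C01 b t)"
  unfolding C01_alg_def
  by (simp, rule Rep_C01_Abs_C01) (simp_all add: continuous_on_mult continuous_on_Rep_C01 Rep_C01_outside)

lemma Rep_C01_neg: "Rep_C01 (c_neg C01_alg a) = (\<lambda>t. - Rep_C01 a t)"
  unfolding C01_alg_def
  by (simp, rule Rep_C01_Abs_C01) (simp_all add: continuous_on_minus continuous_on_Rep_C01 Rep_C01_outside)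

lemma Rep_C01_star: "Rep_C01 (c_star C01_alg a) = (\<lambda>t. cnj (Rep_C01 a t))"
  unfolding C01_alg_def
  by (simp, rule Rep_C01_Abs_C01) (simp_all add: continuous_on_cnj continuous_on_Rep_C01 Rep_C01_outside)

lemma Rep_C01_zero: "Rep_C01 (c_zero C01_alg) = (\<lambda>t. 0)"
  unfolding C01_alg_def by (simp, rule Rep_C01_Abs_C01) simp_all

lemma Rep_C01_one: "t \<in> {0..1} \<Longrightarrow> Rep_C01 (c_one C01_alg) t = 1"
proof -
  have "continuous_on {0..1} (\<lambda>t::real. if t \<in> {0..1} then 1 else 0 :: complex)"
    by (rule continuous_on_cong[THEN iffD1, OF refl _ continuous_on_const[of _ 1]]) auto
  then have "Rep_C01 (Abs_C01 (\<lambda>t. if t \<in> {0..1} then 1 else 0)) = (\<lambda>t. if t \<in> {0..1} then 1 else 0)"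
    by (rule Rep_C01_Abs_C01) simp
  then show "t \<in> {0..1} \<Longrightarrow> Rep_C01 (c_one C01_alg) t = 1"
    unfolding C01_alg_def by simp
qed

interpretation C01: function_calg C01_alg "principal {0..1}" Rep_C01
proof (unfold_locales, unfold eventually_principal)
  show "\<forall>t\<in>{0..1}. \<forall>n. P n t" if "\<And>n::nat. \<forall>t\<in>{0..1}. P n t" for P
    using that by blast
  show "a = b" if "\<forall>t\<in>{0..1}. Rep_C01 a t = Rep_C01 b t" for a b
  proof -
    have "Rep_C01 a = Rep_C01 b"
      using that Rep_C01_outside by fastforce
    then show ?thesis by (simp add: Rep_C01_inject)
  qed
  show "\<forall>t\<in>{0..1}. Rep_C01 (c_add C01_alg a b) t = Rep_C01 a t + Rep_C01 b t" for a b
    by (simp add: Rep_C01_add)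
  show "\<forall>t\<in>{0..1}. Rep_C01 (c_mul C01_alg a b) t = Rep_C01 a t * Rep_C01 b t" for a b
    by (simp add: Rep_C01_mul)
  show "\<forall>t\<in>{0..1}. Rep_C01 (c_neg C01_alg a) t = - Rep_C01 a t" for a
    by (simp add: Rep_C01_neg)
  show "\<forall>t\<in>{0..1}. Rep_C01 (c_star C01_alg a) t = cnj (Rep_C01 a t)" for a
    by (simp add: Rep_C01_star)
  show "\<forall>t\<in>{0..1}. Rep_C01 (c_zero C01_alg) t = 0"
    by (simp add: Rep_C01_zero)
  show "\<forall>t\<in>{0..1}. Rep_C01 (c_one C01_alg) t = 1"
    by (simp add: Rep_C01_one)
  show "c_norm C01_alg a = Inf {C. 0 \<le> C \<and> (\<forall>t\<in>{0..1}. cmod (Rep_C01 a t) \<le> C)}" for a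
    by (rule c_norm_C01)
  show "\<exists>C. \<forall>t\<in>{0..1}. cmod (Rep_C01 a t) \<le> C" for a
    by (rule bounded_Rep_C01)
  show "\<exists>s. \<forall>t\<in>{0..1}. Rep_C01 s t = g t"
    if "\<And>e. 0 < e \<Longrightarrow> \<exists>N. \<forall>n\<ge>N. \<forall>t\<in>{0..1}. cmod (Rep_C01 (a n) t - g t) \<le> e"
    for a :: "nat \<Rightarrow> C01" and g
    using that by (rule C01_complete)
qed

lemma inf_abs_C01_attained:
  obtains t0 where "t0 \<in> {0..1}" "inf_abs_C01 \<alpha> = cmod (Rep_C01 \<alpha> t0)"
    "\<And>t. t \<in> {0..1} \<Longrightarrow> cmod (Rep_C01 \<alpha> t0) \<le> cmod (Rep_C01 \<alpha> t)"
proof -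
  have cont: "continuous_on {0..1} (\<lambda>t. cmod (Rep_C01 \<alpha> t))"
    by (intro continuous_intros continuous_on_Rep_C01)
  obtain t0 where t0: "t0 \<in> {0..1}" "\<forall>t\<in>{0..1}. cmod (Rep_C01 \<alpha> t0) \<le> cmod (Rep_C01 \<alpha> t)"
    using continuous_attains_inf[OF compact_Icc _ cont] by auto
  moreover have "inf_abs_C01 \<alpha> = cmod (Rep_C01 \<alpha> t0)"
    unfolding inf_abs_C01_def using t0 by (intro cInf_eq_minimum) auto
  ultimately show ?thesis using that by blast
qed

lemma C01_not_in_A_spectrum_shift:
  assumes "1 < inf_abs_C01 \<alpha>"
  shows "\<alpha> \<notin> A_spectrum C01_alg (shift C01_alg)"
proof -
  obtain t0 where "t0 \<in> {0..1}" and t0: "inf_abs_C01 \<alpha> = cmod (Rep_C01 \<alpha> t0)"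
    and min: "\<And>t. t \<in> {0..1} \<Longrightarrow> cmod (Rep_C01 \<alpha> t0) \<le> cmod (Rep_C01 \<alpha> t)"
    using inf_abs_C01_attained[of \<alpha>] by blast
  then have bound: "\<forall>t\<in>{0..1}. inf_abs_C01 \<alpha> \<le> cmod (Rep_C01 \<alpha> t)"
    by simp
  have "Rep_C01 \<alpha> t \<noteq> 0" if "t \<in> {0..1}" for t
    using bound that assms by force
  then have "continuous_on {0..1} (\<lambda>t. inverse (Rep_C01 \<alpha> t))"
    by (intro continuous_on_inverse continuous_on_Rep_C01) auto
  then have "\<forall>t\<in>{0..1}. Rep_C01 (Abs_C01 (\<lambda>t. inverse (Rep_C01 \<alpha> t))) t = inverse (Rep_C01 \<alpha> t)"
    by (rule Rep_C01_Abs_C01_pointwise) (simp add: Rep_C01_outside)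
  then have "C01.representable (\<lambda>t. inverse (Rep_C01 \<alpha> t))"
    unfolding C01.representable_def eventually_principal by blast
  with assms bound show ?thesis
    by (intro C01.not_in_A_spectrum_shift_if_bounded_below) (auto simp: eventually_principal)
qed

lemma C01_in_A_spectrum_shift:
  assumes "inf_abs_C01 \<alpha> \<le> 1"
  shows "\<alpha> \<in> A_spectrum C01_alg (shift C01_alg)"
proof (rule C01.in_A_spectrum_shift, unfold eventually_principal)
  fix c :: real
  assume "c > 1"
  obtain t0 where t0: "t0 \<in> {0..1}" "cmod (Rep_C01 \<alpha> t0) \<le> 1"
    using inf_abs_C01_attained[of \<alpha>] assms by metis
  have "continuous_on {0..1} (\<lambda>t. cmod (Rep_C01 \<alpha> t))"
    by (intro continuous_intros continuous_on_Rep_C01)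
  then obtain d where d: "d > 0"
    and near: "\<And>t. t \<in> {0..1} \<Longrightarrow> dist t t0 < d \<Longrightarrow> dist (cmod (Rep_C01 \<alpha> t)) (cmod (Rep_C01 \<alpha> t0)) < c - 1"
    using t0(1) \<open>c > 1\<close> unfolding continuous_on_iff by (metis diff_gt_0_iff_gt)
  define p where "p t = (if t \<in> {0..1} then complex_of_real (max 0 (1 - \<bar>t - t0\<bar> / d)) else 0)" for t
  have "continuous_on {0..1} p"
    unfolding p_def
    by (rule continuous_on_cong[THEN iffD1, OF refl _ continuous_on_of_real[of _ "\<lambda>t. max 0 (1 - \<bar>t - t0\<bar> / d)"]])
       (use d in \<open>auto intro!: continuous_intros\<close>)
  then have p: "\<forall>t\<in>{0..1}. Rep_C01 (Abs_C01 p) t = p t"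
    by (rule Rep_C01_Abs_C01_pointwise) (auto simp: p_def)
  have "p t0 \<noteq> 0"
    using t0(1) by (simp add: p_def)
  moreover have "cmod (Rep_C01 \<alpha> t) \<le> c" if "t \<in> {0..1}" "p t \<noteq> 0" for t
  proof -
    define y where "y = 1 - \<bar>t - t0\<bar> / d"
    have "p t = complex_of_real (max 0 y)"
      using that(1) by (simp add: p_def y_def)
    with that(2) have "max 0 y \<noteq> 0"
      by (metis of_real_0)
    then have "0 < y"
      by (simp add: max_def split: if_splits)
    then have "\<bar>t - t0\<bar> / d < 1"
      by (simp add: y_def)
    then have "dist t t0 < d"
      using d by (simp add: dist_real_def field_simps)
    then show ?thesis
      using near[OF that(1)] t0(2) by (simp add: dist_real_def)
  qed
  ultimately show "\<exists>\<phi>. \<not> (\<forall>t\<in>{0..1}. Rep_C01 \<phi> t = 0) \<and> (\<forall>t\<in>{0..1}. Rep_C01 \<phi> t \<noteq> 0 \<longrightarrow> cmod (Rep_C01 \<alpha> t) \<le> c)"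
    using p t0(1) by (intro exI[of _ "Abs_C01 p"]) auto
qed

lemma C01_A_spectrum_shift: "A_spectrum C01_alg (shift C01_alg) = {\<alpha>. inf_abs_C01 \<alpha> \<le> 1}"
proof (intro set_eqI iffI)
  show "\<alpha> \<in> {\<alpha>. inf_abs_C01 \<alpha> \<le> 1}" if "\<alpha> \<in> A_spectrum C01_alg (shift C01_alg)" for \<alpha>
    using that C01_not_in_A_spectrum_shift[of \<alpha>] by (cases "1 < inf_abs_C01 \<alpha>") auto
qed (simp add: C01_in_A_spectrum_shift)

section \<open>The instance \<open>L\<^sup>\<infinity>(0,1)\<close>\<close>

abbreviation ae_01 :: "real filter" where
  "ae_01 \<equiv> inf (ae_filter lborel) (principal {0<..<1})"

lemma eventually_ae_01: "eventually P ae_01 \<longleftrightarrow> (AE t in lborel. t \<in> {0<..<1} \<longrightarrow> P t)"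
  by (rule eventually_inf_principal)

lemma Linf_setI:
  assumes "(\<lambda>t. indicator {0<..<1} t *\<^sub>R f t) \<in> borel_measurable lborel"
    and "AE t in lborel. t \<in> {0<..<1} \<longrightarrow> cmod (f t) \<le> C"
  shows "f \<in> Linf_set"
  unfolding Linf_set_def set_borel_measurable_def using assms by blast

lemma Linf_setD:
  assumes "f \<in> Linf_set"
  obtains C where "(\<lambda>t. indicator {0<..<1} t *\<^sub>R f t) \<in> borel_measurable lborel"
    and "0 \<le> C" and "AE t in lborel. t \<in> {0<..<1} \<longrightarrow> cmod (f t) \<le> C"
proof -
  from assms obtain C where "(\<lambda>t. indicator {0<..<1} t *\<^sub>R f t) \<in> borel_measurable lborel"
    and C: "AE t in lborel. t \<in> {0<..<1} \<longrightarrow> cmod (f t) \<le> C"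
    unfolding Linf_set_def set_borel_measurable_def by blast
  moreover from C have "AE t in lborel. t \<in> {0<..<1} \<longrightarrow> cmod (f t) \<le> max C 0"
    by eventually_elim auto
  ultimately show ?thesis using that[of "max C 0"] by simp
qed

lemma Linf_set_add: "f \<in> Linf_set \<Longrightarrow> g \<in> Linf_set \<Longrightarrow> (\<lambda>t. f t + g t) \<in> Linf_set"
proof (elim Linf_setD)
  fix C D
  assume "(\<lambda>t. indicator {0<..<1} t *\<^sub>R f t) \<in> borel_measurable lborel"
    "(\<lambda>t. indicator {0<..<1} t *\<^sub>R g t) \<in> borel_measurable lborel"
    and C: "AE t in lborel. t \<in> {0<..<1} \<longrightarrow> cmod (f t) \<le> C"
    and D: "AE t in lborel. t \<in> {0<..<1} \<longrightarrow> cmod (g t) \<le> D"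
  then show ?thesis
  proof (intro Linf_setI)
    from C D show "AE t in lborel. t \<in> {0<..<1} \<longrightarrow> cmod (f t + g t) \<le> C + D"
      by eventually_elim (auto intro: order_trans[OF norm_triangle_ineq])
  qed (simp add: scaleR_add_right)
qed

lemma Linf_set_mult: "f \<in> Linf_set \<Longrightarrow> g \<in> Linf_set \<Longrightarrow> (\<lambda>t. f t * g t) \<in> Linf_set"
proof (elim Linf_setD)
  fix C D
  assume m: "(\<lambda>t. indicator {0<..<1} t *\<^sub>R f t) \<in> borel_measurable lborel"
    "(\<lambda>t. indicator {0<..<1} t *\<^sub>R g t) \<in> borel_measurable lborel"
    and "0 \<le> C"
    and C: "AE t in lborel. t \<in> {0<..<1} \<longrightarrow> cmod (f t) \<le> C"
    and D: "AE t in lborel. t \<in> {0<..<1} \<longrightarrow> cmod (g t) \<le> D"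
  show ?thesis
  proof (rule Linf_setI)
    have "(\<lambda>t. indicator {0<..<1} t *\<^sub>R (f t * g t))
        = (\<lambda>t. (indicator {0<..<1} t *\<^sub>R f t) * (indicator {0<..<1} t *\<^sub>R g t))"
      by (auto simp: indicator_def)
    also have "\<dots> \<in> borel_measurable lborel"
      using m by measurable
    finally show "(\<lambda>t. indicator {0<..<1} t *\<^sub>R (f t * g t)) \<in> borel_measurable lborel" .
    from C D show "AE t in lborel. t \<in> {0<..<1} \<longrightarrow> cmod (f t * g t) \<le> C * D"
      by eventually_elim (use \<open>0 \<le> C\<close> in \<open>auto simp: norm_mult intro!: mult_mono\<close>)
  qed
qed

lemma Linf_set_minus: "f \<in> Linf_set \<Longrightarrow> (\<lambda>t. - f t) \<in> Linf_set"
  by (elim Linf_setD, intro Linf_setI) auto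

lemma Linf_set_cnj: "f \<in> Linf_set \<Longrightarrow> (\<lambda>t. cnj (f t)) \<in> Linf_set"
proof (elim Linf_setD)
  fix C
  assume m: "(\<lambda>t. indicator {0<..<1} t *\<^sub>R f t) \<in> borel_measurable lborel"
    and "AE t in lborel. t \<in> {0<..<1} \<longrightarrow> cmod (f t) \<le> C"
  moreover have "(\<lambda>t. indicator {0<..<1} t *\<^sub>R cnj (f t)) = (\<lambda>t. cnj (indicator {0<..<1} t *\<^sub>R f t))"
    by (simp add: indicator_def)
  moreover have "(\<lambda>t. cnj (indicator {0<..<1} t *\<^sub>R f t)) \<in> borel_measurable lborel"
    by (rule borel_measurable_continuous_on[OF _ m]) (intro continuous_intros)
  ultimately show ?thesis
    by (intro Linf_setI) auto
qed

lemma Linf_set_const: "(\<lambda>t. c) \<in> Linf_set"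
  by (rule Linf_setI[of _ "cmod c"]) simp_all

lemma rep_Linf_in_Linf_set: "rep_Linf a \<in> Linf_set"
  using Quotient3_rep_reflp[OF Quotient3_Linf, of a] unfolding Linf_rel_def by simp

lemma rep_abs_Linf_ae:
  "f \<in> Linf_set \<Longrightarrow> AE t in lborel. t \<in> {0<..<1} \<longrightarrow> rep_Linf (abs_Linf f) t = f t"
  using Quotient3_rep_abs[OF Quotient3_Linf, of f] unfolding Linf_rel_def by blast

lemma Linf_eqI: "(AE t in lborel. t \<in> {0<..<1} \<longrightarrow> rep_Linf a t = rep_Linf b t) \<Longrightarrow> a = b"
  using Quotient3_rel_rep[OF Quotient3_Linf, of a b] rep_Linf_in_Linf_set unfolding Linf_rel_def by blast

lemma Linf_complete:
  fixes a :: "nat \<Rightarrow> Linf"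
  assumes unif: "\<And>e. 0 < e \<Longrightarrow> \<exists>N. \<forall>n\<ge>N. AE t in lborel. t \<in> {0<..<1} \<longrightarrow> cmod (rep_Linf (a n) t - g t) \<le> e"
  shows "\<exists>s. AE t in lborel. t \<in> {0<..<1} \<longrightarrow> rep_Linf s t = g t"
proof -
  have "\<forall>m. \<exists>N. \<forall>n\<ge>N. AE t in lborel. t \<in> {0<..<1} \<longrightarrow> cmod (rep_Linf (a n) t - g t) \<le> 1 / Suc m"
    using unif by simp
  then obtain N where N: "\<And>m n. n \<ge> N m \<Longrightarrow>
      AE t in lborel. t \<in> {0<..<1} \<longrightarrow> cmod (rep_Linf (a n) t - g t) \<le> 1 / Suc m"
    by metis
  have "AE t in lborel. \<forall>m n. n \<ge> N m \<longrightarrow> t \<in> {0<..<1} \<longrightarrow> cmod (rep_Linf (a n) t - g t) \<le> 1 / Suc m"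
    unfolding AE_all_countable by (intro allI) (use N in \<open>auto elim: AE_mp\<close>)
  then have conv: "AE t in lborel. t \<in> {0<..<1} \<longrightarrow> (\<lambda>n. rep_Linf (a n) t) \<longlonglongrightarrow> g t
      \<and> cmod (rep_Linf (a (N 0)) t - g t) \<le> 1"
  proof eventually_elim
    case (elim t)
    show ?case
    proof (intro impI conjI LIMSEQ_I)
      fix r :: real
      assume "t \<in> {0<..<1}" "0 < r"
      then obtain m where "1 / Suc m < r" using nat_approx_posE by blast
      with elim \<open>t \<in> {0<..<1}\<close> show "\<exists>N. \<forall>n\<ge>N. norm (rep_Linf (a n) t - g t) < r"
        by (auto intro: le_less_trans)
    qed (use elim[rule_format, of 0 "N 0"] in simp)
  qed
  define f where "f n t = indicator {0<..<1} t *\<^sub>R rep_Linf (a n) t" for n t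
  define h where "h t = lim (\<lambda>n. f n t)" for t
  have "f n \<in> borel_measurable lborel" for n
    using Linf_setD[OF rep_Linf_in_Linf_set[of "a n"]] unfolding f_def by metis
  then have h_meas: "h \<in> borel_measurable lborel"
    unfolding h_def by measurable
  have h_out: "h t = 0" if "t \<notin> {0<..<1}" for t
    using that by (simp add: h_def f_def limI[of "\<lambda>n. 0" 0])
  have h_ae: "AE t in lborel. t \<in> {0<..<1} \<longrightarrow> h t = g t"
    using conv by eventually_elim (auto simp: h_def f_def limI)
  obtain C where C: "AE t in lborel. t \<in> {0<..<1} \<longrightarrow> cmod (rep_Linf (a (N 0)) t) \<le> C"
    using Linf_setD[OF rep_Linf_in_Linf_set[of "a (N 0)"]] by metis
  have "h \<in> Linf_set"
  proof (rule Linf_setI)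
    have "(\<lambda>t. indicator {0<..<1} t *\<^sub>R h t) = h"
      using h_out by (auto simp: indicator_def)
    with h_meas show "(\<lambda>t. indicator {0<..<1} t *\<^sub>R h t) \<in> borel_measurable lborel"
      by simp
    from conv C h_ae show "AE t in lborel. t \<in> {0<..<1} \<longrightarrow> cmod (h t) \<le> C + 1"
      by eventually_elim (auto dest: norm_triangle_ineq3[THEN order_trans] simp: norm_minus_commute)
  qed
  from rep_abs_Linf_ae[OF this] h_ae
  have "AE t in lborel. t \<in> {0<..<1} \<longrightarrow> rep_Linf (abs_Linf h) t = g t"
    by eventually_elim simp
  then show ?thesis ..
qed

interpretation Linf: function_calg Linf_alg ae_01 rep_Linf
proof (unfold_locales, unfold eventually_ae_01)
  show "AE t in lborel. t \<in> {0<..<1} \<longrightarrow> (\<forall>n. P n t)"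
    if "\<And>n::nat. AE t in lborel. t \<in> {0<..<1} \<longrightarrow> P n t" for P
  proof -
    have "AE t in lborel. \<forall>n. t \<in> {0<..<1} \<longrightarrow> P n t"
      by (subst AE_all_countable) (use that in blast)
    then show ?thesis by eventually_elim blast
  qed
  show "a = b" if "AE t in lborel. t \<in> {0<..<1} \<longrightarrow> rep_Linf a t = rep_Linf b t" for a b
    using that by (rule Linf_eqI)
  show "AE t in lborel. t \<in> {0<..<1} \<longrightarrow> rep_Linf (c_add Linf_alg a b) t = rep_Linf a t + rep_Linf b t"
    for a b
    unfolding Linf_alg_def calg.select_convs by (intro rep_abs_Linf_ae Linf_set_add rep_Linf_in_Linf_set)
  show "AE t in lborel. t \<in> {0<..<1} \<longrightarrow> rep_Linf (c_mul Linf_alg a b) t = rep_Linf a t * rep_Linf b t"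
    for a b
    unfolding Linf_alg_def calg.select_convs by (intro rep_abs_Linf_ae Linf_set_mult rep_Linf_in_Linf_set)
  show "AE t in lborel. t \<in> {0<..<1} \<longrightarrow> rep_Linf (c_neg Linf_alg a) t = - rep_Linf a t" for a
    unfolding Linf_alg_def calg.select_convs by (intro rep_abs_Linf_ae Linf_set_minus rep_Linf_in_Linf_set)
  show "AE t in lborel. t \<in> {0<..<1} \<longrightarrow> rep_Linf (c_star Linf_alg a) t = cnj (rep_Linf a t)" for a
    unfolding Linf_alg_def calg.select_convs by (intro rep_abs_Linf_ae Linf_set_cnj rep_Linf_in_Linf_set)
  show "AE t in lborel. t \<in> {0<..<1} \<longrightarrow> rep_Linf (c_zero Linf_alg) t = 0"
    unfolding Linf_alg_def calg.select_convs by (intro rep_abs_Linf_ae Linf_set_const)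
  show "AE t in lborel. t \<in> {0<..<1} \<longrightarrow> rep_Linf (c_one Linf_alg) t = 1"
    unfolding Linf_alg_def calg.select_convs by (intro rep_abs_Linf_ae Linf_set_const)
  show "c_norm Linf_alg a = Inf {C. 0 \<le> C \<and> (AE t in lborel. t \<in> {0<..<1} \<longrightarrow> cmod (rep_Linf a t) \<le> C)}"
    for a
    by (simp add: Linf_alg_def)
  show "\<exists>C. AE t in lborel. t \<in> {0<..<1} \<longrightarrow> cmod (rep_Linf a t) \<le> C" for a
    using Linf_setD[OF rep_Linf_in_Linf_set[of a]] by metis
  show "\<exists>s. AE t in lborel. t \<in> {0<..<1} \<longrightarrow> rep_Linf s t = g t"
    if "\<And>e. 0 < e \<Longrightarrow> \<exists>N. \<forall>n\<ge>N. AE t in lborel. t \<in> {0<..<1} \<longrightarrow> cmod (rep_Linf (a n) t - g t) \<le> e"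
    for a :: "nat \<Rightarrow> Linf" and g
    using that by (rule Linf_complete)
qed

definition sublevel_Linf :: "Linf \<Rightarrow> real \<Rightarrow> real set" where
  "sublevel_Linf \<alpha> C = {t \<in> {0<..<1}. cmod (rep_Linf \<alpha> t) \<le> C}"

lemma sublevel_Linf_sets: "sublevel_Linf \<alpha> C \<in> sets lborel"
proof -
  have "(\<lambda>t. indicator {0<..<1} t *\<^sub>R rep_Linf \<alpha> t) \<in> borel_measurable lborel"
    using Linf_setD[OF rep_Linf_in_Linf_set[of \<alpha>]] by metis
  then have "{t \<in> space lborel. t \<in> {0<..<1} \<and> cmod (indicator {0<..<1} t *\<^sub>R rep_Linf \<alpha> t) \<le> C} \<in> sets lborel"
    by measurable
  also have "{t \<in> space lborel. t \<in> {0<..<1} \<and> cmod (indicator {0<..<1} t *\<^sub>R rep_Linf \<alpha> t) \<le> C}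
      = sublevel_Linf \<alpha> C"
    by (auto simp: sublevel_Linf_def)
  finally show ?thesis .
qed

lemma essinf_abs_Linf_eq:
  "essinf_abs_Linf \<alpha> = Inf {C. 0 < C \<and> 0 < emeasure lborel (sublevel_Linf \<alpha> C)}"
  unfolding essinf_abs_Linf_def sublevel_Linf_def ..

lemma sublevel_Linf_mono: "C \<le> D \<Longrightarrow> sublevel_Linf \<alpha> C \<subseteq> sublevel_Linf \<alpha> D"
  by (auto simp: sublevel_Linf_def)

lemma essinf_abs_Linf_le:
  "0 < C \<Longrightarrow> 0 < emeasure lborel (sublevel_Linf \<alpha> C) \<Longrightarrow> essinf_abs_Linf \<alpha> \<le> C"
  unfolding essinf_abs_Linf_eq by (intro cInf_lower) (auto intro: bdd_belowI[of _ 0])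

lemma Linf_not_in_A_spectrum_shift:
  assumes "1 < essinf_abs_Linf \<alpha>"
  shows "\<alpha> \<notin> A_spectrum Linf_alg (shift Linf_alg)"
proof -
  define K where "K = (1 + essinf_abs_Linf \<alpha>) / 2"
  have K: "1 < K" "K < essinf_abs_Linf \<alpha>"
    using assms by (simp_all add: K_def)
  then have "emeasure lborel (sublevel_Linf \<alpha> K) = 0"
    using essinf_abs_Linf_le[of K \<alpha>] by (auto simp: not_less[symmetric] zero_less_iff_neq_zero)
  then have "AE t in lborel. t \<notin> sublevel_Linf \<alpha> K"
    by (intro AE_not_in null_setsI sublevel_Linf_sets)
  then have bound: "AE t in lborel. t \<in> {0<..<1} \<longrightarrow> K \<le> cmod (rep_Linf \<alpha> t)"
    by eventually_elim (auto simp: sublevel_Linf_def)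
  have "(\<lambda>t. inverse (rep_Linf \<alpha> t)) \<in> Linf_set"
  proof (rule Linf_setI)
    have "(\<lambda>t. indicator {0<..<1} t *\<^sub>R rep_Linf \<alpha> t) \<in> borel_measurable lborel"
      using Linf_setD[OF rep_Linf_in_Linf_set[of \<alpha>]] by metis
    then have "(\<lambda>t. inverse (indicator {0<..<1} t *\<^sub>R rep_Linf \<alpha> t)) \<in> borel_measurable lborel"
      by measurable
    also have "(\<lambda>t. inverse (indicator {0<..<1} t *\<^sub>R rep_Linf \<alpha> t))
        = (\<lambda>t. indicator {0<..<1} t *\<^sub>R inverse (rep_Linf \<alpha> t))"
      by (auto simp: indicator_def)
    finally show "(\<lambda>t. indicator {0<..<1} t *\<^sub>R inverse (rep_Linf \<alpha> t)) \<in> borel_measurable lborel" .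
    from bound show "AE t in lborel. t \<in> {0<..<1} \<longrightarrow> cmod (inverse (rep_Linf \<alpha> t)) \<le> inverse K"
      by eventually_elim (use K in \<open>auto simp: norm_inverse intro: le_imp_inverse_le\<close>)
  qed
  then have "Linf.representable (\<lambda>t. inverse (rep_Linf \<alpha> t))"
    unfolding Linf.representable_def eventually_ae_01 by (blast dest: rep_abs_Linf_ae)
  with K(1) bound show ?thesis
    by (intro Linf.not_in_A_spectrum_shift_if_bounded_below) (simp_all add: eventually_ae_01)
qed

lemma Linf_in_A_spectrum_shift:
  assumes "essinf_abs_Linf \<alpha> \<le> 1"
  shows "\<alpha> \<in> A_spectrum Linf_alg (shift Linf_alg)"
proof (rule Linf.in_A_spectrum_shift, unfold eventually_ae_01)
  fix c :: real
  assume "c > 1"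
  let ?S = "{C. 0 < C \<and> 0 < emeasure lborel (sublevel_Linf \<alpha> C)}"
  obtain B where "0 \<le> B" and B: "AE t in lborel. t \<in> {0<..<1} \<longrightarrow> cmod (rep_Linf \<alpha> t) \<le> B"
    using Linf_setD[OF rep_Linf_in_Linf_set[of \<alpha>]] by metis
  have "emeasure lborel (sublevel_Linf \<alpha> (B + 1)) = emeasure lborel {0<..<1::real}"
  proof (rule emeasure_eq_AE)
    from B show "AE t in lborel. (t \<in> sublevel_Linf \<alpha> (B + 1)) = (t \<in> {0<..<1})"
      by eventually_elim (auto simp: sublevel_Linf_def)
  qed (rule sublevel_Linf_sets, simp)
  then have "0 < emeasure lborel (sublevel_Linf \<alpha> (B + 1))"
    by simp
  moreover have "0 < B + 1"
    using \<open>0 \<le> B\<close> by simp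
  ultimately have "B + 1 \<in> ?S"
    by blast
  then have "?S \<noteq> {}" by blast
  moreover have "Inf ?S < c"
    using assms \<open>c > 1\<close> unfolding essinf_abs_Linf_eq by simp
  ultimately obtain C where "C \<in> ?S" "C < c"
    by (metis cInf_lessD)
  have "0 < emeasure lborel (sublevel_Linf \<alpha> C)"
    using \<open>C \<in> ?S\<close> by blast
  also have "\<dots> \<le> emeasure lborel (sublevel_Linf \<alpha> c)"
    by (rule emeasure_mono[OF sublevel_Linf_mono sublevel_Linf_sets]) (use \<open>C < c\<close> in simp)
  finally have pos: "0 < emeasure lborel (sublevel_Linf \<alpha> c)" .
  define p where "p t = (if t \<in> sublevel_Linf \<alpha> c then 1 else 0 :: complex)" for t
  have "p \<in> Linf_set"
  proof (rule Linf_setI[where C = 1])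
    have "(\<lambda>t. indicator {0<..<1} t *\<^sub>R p t) = indicator (sublevel_Linf \<alpha> c)"
      by (auto simp: p_def indicator_def sublevel_Linf_def)
    then show "(\<lambda>t. indicator {0<..<1} t *\<^sub>R p t) \<in> borel_measurable lborel"
      using sublevel_Linf_sets[of \<alpha> c] by simp
  qed (simp add: p_def)
  then have p: "AE t in lborel. t \<in> {0<..<1} \<longrightarrow> rep_Linf (abs_Linf p) t = p t"
    by (rule rep_abs_Linf_ae)
  have "\<not> (AE t in lborel. t \<in> {0<..<1} \<longrightarrow> rep_Linf (abs_Linf p) t = 0)"
  proof
    assume "AE t in lborel. t \<in> {0<..<1} \<longrightarrow> rep_Linf (abs_Linf p) t = 0"
    with p have "AE t in lborel. t \<notin> sublevel_Linf \<alpha> c"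
      by eventually_elim (auto simp: p_def sublevel_Linf_def)
    moreover have "{t \<in> space lborel. \<not> t \<notin> sublevel_Linf \<alpha> c} = sublevel_Linf \<alpha> c"
      by simp
    ultimately have "emeasure lborel (sublevel_Linf \<alpha> c) = 0"
      by (simp add: AE_iff_measurable[OF sublevel_Linf_sets])
    with pos show False by simp
  qed
  moreover from p have "AE t in lborel. t \<in> {0<..<1} \<longrightarrow> rep_Linf (abs_Linf p) t \<noteq> 0 \<longrightarrow> cmod (rep_Linf \<alpha> t) \<le> c"
    by eventually_elim (auto simp: p_def sublevel_Linf_def split: if_splits)
  ultimately show "\<exists>\<phi>. \<not> (AE t in lborel. t \<in> {0<..<1} \<longrightarrow> rep_Linf \<phi> t = 0)
      \<and> (AE t in lborel. t \<in> {0<..<1} \<longrightarrow> rep_Linf \<phi> t \<noteq> 0 \<longrightarrow> cmod (rep_Linf \<alpha> t) \<le> c)"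
    by blast
qed

lemma Linf_A_spectrum_shift: "A_spectrum Linf_alg (shift Linf_alg) = {\<alpha>. essinf_abs_Linf \<alpha> \<le> 1}"
proof (intro set_eqI iffI)
  show "\<alpha> \<in> {\<alpha>. essinf_abs_Linf \<alpha> \<le> 1}" if "\<alpha> \<in> A_spectrum Linf_alg (shift Linf_alg)" for \<alpha>
    using that Linf_not_in_A_spectrum_shift[of \<alpha>] by (cases "1 < essinf_abs_Linf \<alpha>") auto
qed (simp add: Linf_in_A_spectrum_shift)

theorem proposition2p1:
  shows "A_spectrum C01_alg (shift C01_alg) = {\<alpha>. inf_abs_C01 \<alpha> \<le> 1}
       \<and> A_point_spectrum C01_alg (shift C01_alg) = {}
       \<and> A_spectrum Linf_alg (shift Linf_alg) = {\<alpha>. essinf_abs_Linf \<alpha> \<le> 1}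
       \<and> A_point_spectrum Linf_alg (shift Linf_alg) = {}"
  using C01_A_spectrum_shift C01.A_point_spectrum_shift Linf_A_spectrum_shift Linf.A_point_spectrum_shift
  by blast

end
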